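(* Let $\alpha_1,\alpha_2\in\mathbb{C}\setminus\mathbb{R}$ and suppose $\operatorname{Im}\alpha_1/\operatorname{Im}\alpha_2$ is an irrational non-Liouville number. Then $\mathcal{N}_2=\emptyset$, i.e. $D_t+\alpha_1D_x+\alpha_2D_y-\lambda$ is globally hypoelliptic on $\mathbb{T}^3$ for every $\lambda\in\mathbb{R}$.
   Context: $\mathbb{T}^n=\mathbb{R}^n/2\pi\mathbb{Z}^n$; $D_t=-i\partial_t$ etc. A linear differential operator $P$ on $\mathbb{T}^n$ is globally hypoelliptic (GH) if $u\in\mathcal{D}'(\mathbb{T}^n)$ and $Pu\in\mathcal{C}^\infty(\mathbb{T}^n)$ imply $u\in\mathcal{C}^\infty(\mathbb{T}^n)$. $\mathcal{N}_2=\{\lambda\in\mathbb{R}: D_t+\alpha_1D_x+\alpha_2D_y-\lambda\text{ is not GH on }\mathbb{T}^3_{(t,x,y)}\}$. A real number $\rho$ is Liouville if it is irrational and for every $M>0$ there are infinitely many $(p,q)\in\mathbb{Z}\times\mathbb{N}$ with $|\rho-p/q|<q^{-M}$. *)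

theory Defs
  imports "HOL-Analysis.Analysis" "HOL-Library.Numeral_Type"
begin

text \<open>Points of the torus T^n = R^n / 2 pi Z^n are represented by points of R^n
  (type real^'n); functions on the torus are 2 pi-periodic functions in each coordinate.\<close>

definition torus_periodic :: "(real^'n \<Rightarrow> complex) \<Rightarrow> bool" where
  "torus_periodic f \<longleftrightarrow> (\<forall>j x. f (x + (2*pi) *\<^sub>R axis j 1) = f x)"

definition pd :: "'n::finite \<Rightarrow> (real^'n \<Rightarrow> complex) \<Rightarrow> real^'n \<Rightarrow> complex" where
  "pd j f x = vector_derivative (\<lambda>s. f (x + s *\<^sub>R axis j 1)) (at 0)"

definition dpar :: "'n::finite list \<Rightarrow> (real^'n \<Rightarrow> complex) \<Rightarrow> real^'n \<Rightarrow> complex" where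
  "dpar js f = foldr pd js f"

definition smooth_fun :: "(real^'n::finite \<Rightarrow> complex) \<Rightarrow> bool" where
  "smooth_fun f \<longleftrightarrow>
     (\<forall>js j x. (\<lambda>s. dpar js f (x + s *\<^sub>R axis j 1)) differentiable (at 0)) \<and>
     (\<forall>js. continuous_on UNIV (dpar js f))"

definition torus_smooth :: "(real^'n::finite \<Rightarrow> complex) \<Rightarrow> bool" where
  "torus_smooth f \<longleftrightarrow> torus_periodic f \<and> smooth_fun f"

text \<open>D'(T^n): continuous linear functionals on C^infinity(T^n); continuity is
  expressed by the standard seminorm estimate.\<close>
definition torus_distribution :: "((real^'n::finite \<Rightarrow> complex) \<Rightarrow> complex) \<Rightarrow> bool" where
  "torus_distribution u \<longleftrightarrow>
     (\<forall>a b \<phi> \<psi>. torus_smooth \<phi> \<longrightarrow> torus_smooth \<psi> \<longrightarrow>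
        u (\<lambda>x. a * \<phi> x + b * \<psi> x) = a * u \<phi> + b * u \<psi>) \<and>
     (\<exists>C N. \<forall>\<phi>. torus_smooth \<phi> \<longrightarrow>
        norm (u \<phi>) \<le> C * (\<Sum>js\<in>{js::'n list. length js \<le> N}. SUP x. norm (dpar js \<phi> x)))"

definition dist_of :: "(real^'n::finite \<Rightarrow> complex) \<Rightarrow> (real^'n \<Rightarrow> complex) \<Rightarrow> complex" where
  "dist_of f \<phi> = integral (cbox 0 (\<chi> i. 2*pi)) (\<lambda>x. f x * \<phi> x)"

definition smooth_dist :: "((real^'n::finite \<Rightarrow> complex) \<Rightarrow> complex) \<Rightarrow> bool" where
  "smooth_dist u \<longleftrightarrow> (\<exists>f. torus_smooth f \<and> (\<forall>\<phi>. torus_smooth \<phi> \<longrightarrow> u \<phi> = dist_of f \<phi>))"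

definition Dop :: "'n::finite \<Rightarrow> (real^'n \<Rightarrow> complex) \<Rightarrow> real^'n \<Rightarrow> complex" where
  "Dop j f x = - \<i> * pd j f x"

definition cc_op :: "('n::finite \<Rightarrow> complex) \<Rightarrow> complex \<Rightarrow> (real^'n \<Rightarrow> complex) \<Rightarrow> real^'n \<Rightarrow> complex" where
  "cc_op c c0 f x = (\<Sum>j\<in>UNIV. c j * Dop j f x) + c0 * f x"

text \<open>Action on distributions via the formal transpose: (P u)(phi) = u(P^t phi),
  where P^t = sum_j (- c_j) D_j + c0.\<close>
definition cc_op_dist :: "('n::finite \<Rightarrow> complex) \<Rightarrow> complex \<Rightarrow>
    ((real^'n \<Rightarrow> complex) \<Rightarrow> complex) \<Rightarrow> (real^'n \<Rightarrow> complex) \<Rightarrow> complex" where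
  "cc_op_dist c c0 u \<phi> = u (cc_op (\<lambda>j. - c j) c0 \<phi>)"

definition globally_hypoelliptic :: "('n::finite \<Rightarrow> complex) \<Rightarrow> complex \<Rightarrow> bool" where
  "globally_hypoelliptic c c0 \<longleftrightarrow>
     (\<forall>u. torus_distribution u \<longrightarrow> smooth_dist (cc_op_dist c c0 u) \<longrightarrow> smooth_dist u)"

text \<open>Coordinates (t,x,y) of T^3 are indices 0,1,2 of type 3.
  Coefficients of D_t + alpha1 D_x + alpha2 D_y.\<close>
definition coeffs2 :: "complex \<Rightarrow> complex \<Rightarrow> 3 \<Rightarrow> complex" where
  "coeffs2 \<alpha>1 \<alpha>2 j = (if j = 0 then 1 else if j = 1 then \<alpha>1 else \<alpha>2)"

definition N2 :: "complex \<Rightarrow> complex \<Rightarrow> real set" where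
  "N2 \<alpha>1 \<alpha>2 = {l::real. \<not> globally_hypoelliptic (coeffs2 \<alpha>1 \<alpha>2) (- complex_of_real l)}"

definition liouville :: "real \<Rightarrow> bool" where
  "liouville \<rho> \<longleftrightarrow> \<rho> \<notin> \<rat> \<and>
     (\<forall>M>0. infinite {(p, q) | (p::int) (q::nat). q > 0 \<and> \<bar>\<rho> - of_int p / of_nat q\<bar> < real q powr (- M)})"

end

theory Submission
  imports Defs
begin

text \<open>On the torus the operator acts diagonally on the characters \<open>e\<^sub>k(x) = exp (\<i> k\<cdot>x)\<close>:
  its transpose maps \<open>e\<^sub>k\<close> to \<open>q(k) e\<^sub>k\<close> with \<open>q(k) = -\<lambda> - (k\<^sub>t + \<alpha>\<^sub>1 k\<^sub>x + \<alpha>\<^sub>2 k\<^sub>y)\<close>.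
  If \<open>P u = f\<close> with \<open>f\<close> smooth, then \<open>q(k) u(e\<^sub>k) = \<integral> f e\<^sub>k\<close>, which decays faster than any
  power of \<open>|k|\<close>. Because \<open>Im q(k) = -(Im \<alpha>\<^sub>1 k\<^sub>x + Im \<alpha>\<^sub>2 k\<^sub>y)\<close> and \<open>Im \<alpha>\<^sub>1 / Im \<alpha>\<^sub>2\<close> is
  an irrational non-Liouville number, \<open>|q(k)|\<close> is bounded below by a negative power of \<open>|k|\<close>
  for all but finitely many \<open>k\<close>. Hence \<open>u(e\<^sub>k)\<close> decays rapidly too, and by Fourier inversion
  for smooth functions (the characters being complete by the Stone--Weierstrass theorem) and
  continuity of \<open>u\<close>, \<open>u\<close> is the smooth function \<open>\<Sum>\<^sub>k u(e\<^sub>k) e\<^sub>-\<^sub>k / (2\<pi>)\<^sup>3\<close>.\<close>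

section \<open>Characters of the torus\<close>

definition torus_char :: "('n::finite \<Rightarrow> int) \<Rightarrow> real^'n \<Rightarrow> complex" where
  "torus_char k x = exp (\<i> * of_real (\<Sum>i\<in>UNIV. of_int (k i) * x$i))"

definition freq_norm :: "('n::finite \<Rightarrow> int) \<Rightarrow> real" where
  "freq_norm k = (\<Sum>i\<in>UNIV. \<bar>real_of_int (k i)\<bar>)"

definition dpar_symbol :: "'n list \<Rightarrow> ('n \<Rightarrow> int) \<Rightarrow> complex" where
  "dpar_symbol js k = (\<Prod>j\<leftarrow>js. \<i> * of_int (k j))"

lemma freq_norm_nonneg: "freq_norm k \<ge> 0"
  unfolding freq_norm_def by (simp add: sum_nonneg)

lemma abs_le_freq_norm: "\<bar>real_of_int (k i)\<bar> \<le> freq_norm k"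
  unfolding freq_norm_def by (rule member_le_sum) auto

lemma freq_norm_uminus [simp]: "freq_norm (- k) = freq_norm k"
  by (simp add: freq_norm_def)

lemma freq_norm_power_le:
  fixes k :: "'n::finite \<Rightarrow> int"
  shows "(1 + freq_norm k) ^ m \<le>
    (1 + real CARD('n)) ^ m * (1 + (\<Sum>i\<in>UNIV. \<bar>real_of_int (k i)\<bar> ^ m))"
proof -
  obtain j where j: "\<And>i. \<bar>real_of_int (k i)\<bar> \<le> \<bar>real_of_int (k j)\<bar>"
  proof -
    define f where "f i = \<bar>real_of_int (k i)\<bar>" for i
    have "Max (range f) \<in> range f"
      by (rule Max_in) auto
    then obtain j where "Max (range f) = f j"
      by (rule rangeE) simp
    then show ?thesis
      using that[of j] Max_ge[of "range f"] unfolding f_def by fastforce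
  qed
  define M where "M = max 1 \<bar>real_of_int (k j)\<bar>"
  have "freq_norm k \<le> real CARD('n) * \<bar>real_of_int (k j)\<bar>"
    unfolding freq_norm_def using sum_bounded_above[of UNIV "\<lambda>i. \<bar>real_of_int (k i)\<bar>", OF j] by simp
  also have "\<dots> \<le> real CARD('n) * M"
    unfolding M_def by (intro mult_left_mono) auto
  finally have "1 + freq_norm k \<le> (1 + real CARD('n)) * M"
    unfolding M_def by (simp add: algebra_simps)
  then have "(1 + freq_norm k) ^ m \<le> ((1 + real CARD('n)) * M) ^ m"
    using freq_norm_nonneg[of k] by (intro power_mono) auto
  also have "\<dots> = (1 + real CARD('n)) ^ m * M ^ m"
    by (simp add: power_mult_distrib)
  also have "M ^ m \<le> 1 + (\<Sum>i\<in>UNIV. \<bar>real_of_int (k i)\<bar> ^ m)"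
  proof -
    have "\<bar>real_of_int (k j)\<bar> ^ m \<le> (\<Sum>i\<in>UNIV. \<bar>real_of_int (k i)\<bar> ^ m)"
      by (rule member_le_sum) auto
    moreover have "0 \<le> (\<Sum>i\<in>UNIV. \<bar>real_of_int (k i)\<bar> ^ m)"
      by (simp add: sum_nonneg)
    ultimately show ?thesis
      unfolding M_def by (cases "1 \<le> \<bar>real_of_int (k j)\<bar>") (auto simp: max_def)
  qed
  finally show ?thesis
    by (simp add: mult_left_mono)
qed

lemma dpar_symbol_Cons: "dpar_symbol (j # js) k = \<i> * of_int (k j) * dpar_symbol js k"
  by (simp add: dpar_symbol_def)

lemma norm_dpar_symbol_le: "norm (dpar_symbol js k) \<le> (1 + freq_norm k) ^ length js"
proof (induction js)
  case Nil
  then show ?case by (simp add: dpar_symbol_def)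
next
  case (Cons j js)
  have "norm (dpar_symbol (j # js) k) = \<bar>real_of_int (k j)\<bar> * norm (dpar_symbol js k)"
    by (simp add: dpar_symbol_Cons norm_mult)
  also have "\<dots> \<le> (1 + freq_norm k) * (1 + freq_norm k) ^ length js"
    using Cons abs_le_freq_norm[of k j] by (intro mult_mono) auto
  finally show ?case by simp
qed

lemma norm_dpar_symbol_replicate:
  "norm (dpar_symbol (replicate m j) k) = \<bar>real_of_int (k j)\<bar> ^ m"
  by (simp add: dpar_symbol_def map_replicate prod_list_replicate norm_power norm_mult)

lemma dpar_Nil [simp]: "dpar [] f = f"
  by (simp add: dpar_def)

lemma dpar_Cons [simp]: "dpar (j # js) f = pd j (dpar js f)"
  by (simp add: dpar_def)

lemma dpar_append: "dpar (js @ ks) f = dpar js (dpar ks f)"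
  by (simp add: dpar_def)

lemma torus_char_line:
  "torus_char k (x + s *\<^sub>R axis j 1) = torus_char k x * exp (\<i> * of_real (of_int (k j) * s))"
proof -
  have "(\<Sum>i\<in>UNIV. of_int (k i) * (x + s *\<^sub>R axis j 1)$i) =
        (\<Sum>i\<in>UNIV. of_int (k i) * x$i + (if i = j then of_int (k j) * s else 0))"
    by (rule sum.cong) (auto simp: axis_def algebra_simps)
  then show ?thesis
    by (simp add: torus_char_def sum.distrib algebra_simps exp_add)
qed

lemma torus_char_periodic: "torus_char k (x + (2*pi) *\<^sub>R axis j 1) = torus_char k x"
proof -
  have "exp (\<i> * complex_of_real (real_of_int (k j) * (2 * pi))) = 1"
    using exp_2pi_1_int[of "k j"] by (simp add: algebra_simps)
  then show ?thesis by (simp add: torus_char_line)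
qed

lemma torus_char_mult: "torus_char k x * torus_char l x = torus_char (\<lambda>i. k i + l i) x"
  unfolding torus_char_def by (simp add: exp_add[symmetric] sum.distrib algebra_simps)

lemma torus_char_zero [simp]: "torus_char (\<lambda>i. 0) x = 1"
  by (simp add: torus_char_def)

lemma norm_torus_char [simp]: "norm (torus_char k x) = 1"
  unfolding torus_char_def by (rule norm_exp_i_times)

lemma continuous_on_torus_char [continuous_intros]: "continuous_on A (torus_char k)"
  unfolding torus_char_def by (intro continuous_intros)

lemma has_vector_derivative_torus_char_line:
  "((\<lambda>s. c * torus_char k (x + s *\<^sub>R axis j 1)) has_vector_derivative
     (c * (\<i> * of_int (k j)) * torus_char k (x + s0 *\<^sub>R axis j 1))) (at s0)"
proof -
  have "((\<lambda>z. exp (\<i> * of_int (k j) * z)) has_field_derivative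
          (exp (\<i> * of_int (k j) * of_real s0) * (\<i> * of_int (k j)))) (at (of_real s0))"
    by (auto intro!: derivative_eq_intros)
  from has_vector_derivative_real_field[OF this]
  have "((\<lambda>s. exp (\<i> * of_real (of_int (k j) * s))) has_vector_derivative
          (\<i> * of_int (k j) * exp (\<i> * of_real (of_int (k j) * s0)))) (at s0)"
    by (simp add: algebra_simps)
  from has_vector_derivative_mult_right[OF this, of "c * torus_char k x"] show ?thesis
    by (simp add: torus_char_line algebra_simps)
qed

lemma pd_scaled_torus_char:
  "pd j (\<lambda>x. c * torus_char k x) x = c * (\<i> * of_int (k j)) * torus_char k x"
  unfolding pd_def
  using vector_derivative_at[OF has_vector_derivative_torus_char_line[of c k x j 0]] by simp

lemma pd_torus_char: "pd j (torus_char k) x = \<i> * of_int (k j) * torus_char k x"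
  using pd_scaled_torus_char[of j 1 k x] by simp

lemma dpar_torus_char: "dpar js (torus_char k) = (\<lambda>x. dpar_symbol js k * torus_char k x)"
proof (induction js)
  case Nil
  then show ?case by (simp add: dpar_symbol_def)
next
  case (Cons j js)
  then show ?case
    by (simp add: pd_scaled_torus_char dpar_symbol_Cons algebra_simps)
qed

lemma torus_char_line_differentiable:
  "(\<lambda>s. torus_char k (x + s *\<^sub>R axis j 1)) differentiable (at 0)"
  using differentiableI_vector[OF has_vector_derivative_torus_char_line[of 1 k x j 0]] by simp

lemma torus_smooth_torus_char: "torus_smooth (torus_char k)"
  unfolding torus_smooth_def smooth_fun_def torus_periodic_def
proof (intro conjI allI)
  fix js j x
  show "(\<lambda>s. dpar js (torus_char k) (x + s *\<^sub>R axis j 1)) differentiable at 0"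
    unfolding dpar_torus_char
    by (rule differentiableI_vector[OF has_vector_derivative_torus_char_line])
qed (auto simp: torus_char_periodic dpar_torus_char intro!: continuous_intros)


section \<open>Series of characters with rapidly decaying coefficients\<close>

definition rapid_decay :: "(nat \<Rightarrow> complex) \<Rightarrow> (nat \<Rightarrow> ('n::finite \<Rightarrow> int)) \<Rightarrow> bool" where
  "rapid_decay a k \<longleftrightarrow> (\<forall>m. summable (\<lambda>n. norm (a n) * (1 + freq_norm (k n)) ^ m))"

definition char_series :: "(nat \<Rightarrow> complex) \<Rightarrow> (nat \<Rightarrow> ('n::finite \<Rightarrow> int)) \<Rightarrow> real^'n \<Rightarrow> complex"
  where "char_series a k x = (\<Sum>n. a n * torus_char (k n) x)"

lemma rapid_decay_summable: "rapid_decay a k \<Longrightarrow> summable (\<lambda>n. norm (a n))"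
  unfolding rapid_decay_def by (drule spec[of _ 0]) simp

lemma rapid_decay_uminus [simp]: "rapid_decay a (\<lambda>n. - k n) \<longleftrightarrow> rapid_decay a k"
  by (simp add: rapid_decay_def)

lemma rapid_decay_mono:
  assumes "rapid_decay a k" and "\<And>n. norm (b n) \<le> norm (a n)"
  shows "rapid_decay b k"
  unfolding rapid_decay_def
proof
  fix m
  show "summable (\<lambda>n. norm (b n) * (1 + freq_norm (k n)) ^ m)"
    using assms(1) unfolding rapid_decay_def
    by (rule_tac summable_comparison_test[of _ "\<lambda>n. norm (a n) * (1 + freq_norm (k n)) ^ m"])
       (auto intro!: exI[of _ 0] mult_right_mono assms(2) simp: freq_norm_nonneg)
qed

lemma rapid_decay_cmult: "rapid_decay a k \<Longrightarrow> rapid_decay (\<lambda>n. c * a n) k"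
  unfolding rapid_decay_def by (simp add: norm_mult mult.assoc summable_mult)

lemma rapid_decay_mult_dpar_symbol:
  assumes "rapid_decay a k"
  shows "rapid_decay (\<lambda>n. a n * dpar_symbol js (k n)) k"
  unfolding rapid_decay_def
proof
  fix m
  have s: "summable (\<lambda>n. norm (a n) * (1 + freq_norm (k n)) ^ (m + length js))"
    using assms unfolding rapid_decay_def by blast
  have "norm (a n * dpar_symbol js (k n)) * (1 + freq_norm (k n)) ^ m
      \<le> norm (a n) * (1 + freq_norm (k n)) ^ (m + length js)" for n
    using mult_left_mono[OF mult_right_mono[OF norm_dpar_symbol_le[of js "k n"],
          of "(1 + freq_norm (k n)) ^ m"], of "norm (a n)"] freq_norm_nonneg[of "k n"]
    by (simp add: norm_mult power_add mult_ac)
  then show "summable (\<lambda>n. norm (a n * dpar_symbol js (k n)) * (1 + freq_norm (k n)) ^ m)"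
    by (intro summable_comparison_test'[OF s]) (simp add: freq_norm_nonneg)
qed

lemma summable_char_series:
  "summable (\<lambda>n. norm (a n)) \<Longrightarrow> summable (\<lambda>n. a n * torus_char (k n) x)"
  by (rule summable_norm_cancel) (simp add: norm_mult)

lemma norm_char_series_le:
  assumes "summable (\<lambda>n. norm (a n))"
  shows "norm (char_series a k x) \<le> (\<Sum>n. norm (a n))"
proof -
  have "norm (char_series a k x) \<le> (\<Sum>n. norm (a n * torus_char (k n) x))"
    unfolding char_series_def by (rule summable_norm) (simp add: norm_mult assms)
  then show ?thesis by (simp add: norm_mult)
qed

lemma uniform_limit_char_series:
  assumes "summable (\<lambda>n. norm (a n))"
  shows "uniform_limit A (\<lambda>N x. \<Sum>n<N. a n * torus_char (k n) x) (char_series a k) sequentially"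
  unfolding char_series_def[abs_def]
  by (rule Weierstrass_m_test[OF _ assms]) (simp add: norm_mult)

lemma continuous_on_char_series:
  assumes "summable (\<lambda>n. norm (a n))"
  shows "continuous_on A (char_series a k)"
  by (rule uniform_limit_theorem[OF _ uniform_limit_char_series[OF assms]])
     (auto intro!: always_eventually continuous_intros)

lemma char_series_periodic: "char_series a k (x + (2*pi) *\<^sub>R axis j 1) = char_series a k x"
  unfolding char_series_def by (simp add: torus_char_periodic)

lemma has_vector_derivative_series:
  fixes f :: "nat \<Rightarrow> real \<Rightarrow> 'a::banach"
  assumes "\<And>n s. (f n has_vector_derivative f' n s) (at s)"
    and "uniform_limit UNIV (\<lambda>N s. \<Sum>n<N. f' n s) g' sequentially"
    and "summable (\<lambda>n. f n 0)"
  shows "((\<lambda>s. \<Sum>n. f n s) has_vector_derivative g' s) (at s)"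
proof -
  have "\<exists>g. \<forall>s\<in>UNIV. (\<lambda>n. f n s) sums g s \<and> (g has_derivative (\<lambda>h. h *\<^sub>R g' s)) (at s within UNIV)"
  proof (rule has_derivative_series[where f' = "\<lambda>n s h. h *\<^sub>R f' n s"])
    show "(f n has_derivative (\<lambda>h. h *\<^sub>R f' n s)) (at s within UNIV)" for n s
      using assms(1) by (simp add: has_vector_derivative_def)
    show "\<forall>\<^sub>F N in sequentially. \<forall>s\<in>UNIV. \<forall>h.
        norm ((\<Sum>n<N. h *\<^sub>R f' n s) - h *\<^sub>R g' s) \<le> e * norm h" if "e > 0" for e
    proof -
      from assms(2) that have "\<forall>\<^sub>F N in sequentially. \<forall>s. dist (\<Sum>n<N. f' n s) (g' s) < e"
        unfolding uniform_limit_iff by simp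
      then show ?thesis
      proof eventually_elim
        case (elim N)
        show ?case
        proof (intro ballI allI)
          fix s h
          from elim have "norm ((\<Sum>n<N. f' n s) - g' s) \<le> e"
            by (simp add: dist_norm less_imp_le)
          then show "norm ((\<Sum>n<N. h *\<^sub>R f' n s) - h *\<^sub>R g' s) \<le> e * norm h"
            by (simp add: scaleR_sum_right[symmetric] scaleR_diff_right[symmetric]
                mult.commute[of e] mult_left_mono)
        qed
      qed
    qed
    show "(\<lambda>n. f n 0) sums (\<Sum>n. f n 0)"
      using assms(3) by (rule summable_sums)
  qed auto
  then obtain g where "\<And>s. (\<lambda>n. f n s) sums g s"
    and "\<And>s. (g has_derivative (\<lambda>h. h *\<^sub>R g' s)) (at s)"
    by auto
  moreover from this(1) have "g = (\<lambda>s. \<Sum>n. f n s)"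
    by (auto simp: sums_iff)
  ultimately show ?thesis
    by (simp add: has_vector_derivative_def)
qed

lemma has_vector_derivative_char_series_line:
  assumes "rapid_decay a k"
  shows "((\<lambda>s. char_series a k (x + s *\<^sub>R axis j 1)) has_vector_derivative
           char_series (\<lambda>n. a n * (\<i> * of_int (k n j))) k (x + s *\<^sub>R axis j 1)) (at s)"
  unfolding char_series_def
proof (rule has_vector_derivative_series)
  have s: "summable (\<lambda>n. norm (a n * (\<i> * of_int (k n j))))"
    using rapid_decay_summable[OF rapid_decay_mult_dpar_symbol[OF assms, of "[j]"]]
    by (simp add: dpar_symbol_def)
  show "uniform_limit UNIV
      (\<lambda>N s. \<Sum>n<N. a n * (\<i> * of_int (k n j)) * torus_char (k n) (x + s *\<^sub>R axis j 1))
      (\<lambda>s. \<Sum>n. a n * (\<i> * of_int (k n j)) * torus_char (k n) (x + s *\<^sub>R axis j 1)) sequentially"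
    by (rule Weierstrass_m_test[OF _ s]) (simp add: norm_mult)
  show "summable (\<lambda>n. a n * torus_char (k n) (x + 0 *\<^sub>R axis j 1))"
    by (rule summable_char_series[OF rapid_decay_summable[OF assms]])
qed (rule has_vector_derivative_torus_char_line)

lemma dpar_char_series:
  assumes "rapid_decay a k"
  shows "dpar js (char_series a k) = char_series (\<lambda>n. a n * dpar_symbol js (k n)) k"
proof (induction js)
  case Nil
  then show ?case by (simp add: dpar_symbol_def)
next
  case (Cons j js)
  have "pd j (char_series (\<lambda>n. a n * dpar_symbol js (k n)) k) x =
      char_series (\<lambda>n. a n * dpar_symbol (j # js) (k n)) k x" for x
    unfolding pd_def
    using vector_derivative_at[OF has_vector_derivative_char_series_line[OF
          rapid_decay_mult_dpar_symbol[OF assms], of js x j 0]]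
    by (simp add: dpar_symbol_Cons algebra_simps)
  then show ?case
    by (simp add: Cons fun_eq_iff)
qed

lemma torus_smooth_char_series:
  assumes "rapid_decay a k"
  shows "torus_smooth (char_series a k)"
  unfolding torus_smooth_def smooth_fun_def torus_periodic_def dpar_char_series[OF assms]
proof (intro conjI allI)
  show "(\<lambda>s. char_series (\<lambda>n. a n * dpar_symbol js (k n)) k (x + s *\<^sub>R axis j 1))
      differentiable at 0" for js j x
    by (rule differentiableI_vector[OF has_vector_derivative_char_series_line[OF
          rapid_decay_mult_dpar_symbol[OF assms]]])
  show "continuous_on UNIV (char_series (\<lambda>n. a n * dpar_symbol js (k n)) k)" for js
    by (rule continuous_on_char_series[OF rapid_decay_summable[OF
          rapid_decay_mult_dpar_symbol[OF assms]]])
qed (simp add: char_series_periodic)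

lemma norm_dpar_char_series_le:
  assumes "rapid_decay a k"
  shows "norm (dpar js (char_series a k) x) \<le> (\<Sum>n. norm (a n) * (1 + freq_norm (k n)) ^ length js)"
proof -
  have s1: "summable (\<lambda>n. norm (a n * dpar_symbol js (k n)))"
    by (rule rapid_decay_summable[OF rapid_decay_mult_dpar_symbol[OF assms]])
  have s2: "summable (\<lambda>n. norm (a n) * (1 + freq_norm (k n)) ^ length js)"
    using assms unfolding rapid_decay_def by blast
  have "norm (dpar js (char_series a k) x) \<le> (\<Sum>n. norm (a n * dpar_symbol js (k n)))"
    unfolding dpar_char_series[OF assms] by (rule norm_char_series_le[OF s1])
  also have "\<dots> \<le> (\<Sum>n. norm (a n) * (1 + freq_norm (k n)) ^ length js)"
    by (rule suminf_le[OF _ s1 s2]) (simp add: norm_mult mult_left_mono norm_dpar_symbol_le)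
  finally show ?thesis .
qed


section \<open>Integration over a period box\<close>

abbreviation torus_box :: "(real^'n::finite) set" where
  "torus_box \<equiv> cbox 0 (\<chi> i. 2*pi)"

lemma content_torus_box: "measure lborel (torus_box :: (real^'n::finite) set) = (2*pi) ^ CARD('n)"
proof -
  have "(0::real^'n) \<in> torus_box"
    by (simp add: mem_box_cart)
  then have "(torus_box :: (real^'n) set) \<noteq> {}"
    by blast
  then show ?thesis
    by (simp add: content_cbox_cart)
qed

lemma integral_translate_cbox:
  fixes h :: "real^'n::finite \<Rightarrow> complex"
  assumes "continuous_on UNIV h"
  shows "integral (cbox a b) (\<lambda>x. h (x + c)) = integral (cbox (a + c) (b + c)) h"
proof -
  have "(h has_integral integral (cbox (a + c) (b + c)) h) (cbox (a + c) (b + c))"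
    using integrable_continuous[OF continuous_on_subset[OF assms]] by auto
  from has_integral_affinity'[OF this, of 1 c] show ?thesis
    by (simp add: add.commute integral_unique)
qed

lemma integral_torus_box_shift:
  fixes h :: "real^'n::finite \<Rightarrow> complex"
  assumes cont: "continuous_on UNIV h"
    and per: "\<And>x. h (x + (2*pi) *\<^sub>R axis j 1) = h x"
    and s: "0 \<le> s" "s \<le> 2*pi"
  shows "integral torus_box (\<lambda>x. h (x + s *\<^sub>R axis j 1)) = integral torus_box h"
proof -
  define e :: "real^'n" where "e = axis j 1"
  have eB: "e \<in> Basis" and inner_e: "x \<bullet> e = x $ j" for x :: "real^'n"
    by (simp_all add: e_def inner_axis)
  have int: "h integrable_on cbox a b" for a b
    by (rule integrable_continuous[OF continuous_on_subset[OF cont]]) auto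
  define lo :: "real^'n" where "lo = (\<chi> i. if i = j then 2*pi else 0)"
  define hi :: "real^'n" where "hi = (\<chi> i. if i = j then 2*pi + s else 2*pi)"
  define hi' :: "real^'n" where "hi' = (\<chi> i. if i = j then s else 2*pi)"
  \<comment> \<open>the shifted box is cut at \<open>x$j = 2\<pi>\<close>; its upper slab is the lower slab of the
      period box translated by one period\<close>
  have "integral torus_box (\<lambda>x. h (x + s *\<^sub>R e)) = integral (cbox (s *\<^sub>R e) ((\<chi> i. 2*pi) + s *\<^sub>R e)) h"
    using integral_translate_cbox[OF cont, of 0 "\<chi> i. 2*pi" "s *\<^sub>R e"] by simp
  also have "\<dots> = integral (torus_box \<inter> {x. x \<bullet> e \<ge> s}) h + integral (cbox lo hi) h"
  proof -
    have "cbox (s *\<^sub>R e) ((\<chi> i. 2*pi) + s *\<^sub>R e) \<inter> {x. x \<bullet> e \<le> 2*pi} = torus_box \<inter> {x. x \<bullet> e \<ge> s}"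
      unfolding inner_e using s
      by (auto simp: mem_box_cart e_def axis_def split: if_splits) (smt (verit))+
    moreover have "cbox (s *\<^sub>R e) ((\<chi> i. 2*pi) + s *\<^sub>R e) \<inter> {x. x \<bullet> e \<ge> 2*pi} = cbox lo hi"
      unfolding inner_e using s
      by (auto simp: mem_box_cart e_def axis_def lo_def hi_def split: if_splits) (smt (verit))+
    ultimately show ?thesis
      using integral_split[OF int eB, of "s *\<^sub>R e" "(\<chi> i. 2*pi) + s *\<^sub>R e" "2*pi"] by simp
  qed
  also have "integral (cbox lo hi) h = integral (cbox 0 hi') h"
  proof -
    have "0 + (2*pi) *\<^sub>R e = lo" and "hi' + (2*pi) *\<^sub>R e = hi"
      by (auto simp: vec_eq_iff lo_def hi_def hi'_def e_def axis_def)
    then have "integral (cbox lo hi) h = integral (cbox 0 hi') (\<lambda>x. h (x + (2*pi) *\<^sub>R e))"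
      using integral_translate_cbox[OF cont, of 0 hi' "(2*pi) *\<^sub>R e"] by simp
    then show ?thesis
      using per by (simp add: e_def)
  qed
  also have "cbox 0 hi' = torus_box \<inter> {x. x \<bullet> e \<le> s}"
    unfolding inner_e using s
    by (auto simp: mem_box_cart e_def axis_def hi'_def split: if_splits) (smt (verit))+
  also have "integral (torus_box \<inter> {x. x \<bullet> e \<ge> s}) h + integral (torus_box \<inter> {x. x \<bullet> e \<le> s}) h
      = integral torus_box h"
    using integral_split[OF int eB, of 0 "\<chi> i. 2*pi" s] by simp
  finally show ?thesis
    by (simp add: e_def)
qed

lemma has_vector_derivative_pd_line:
  assumes "\<And>y. (\<lambda>s. h (y + s *\<^sub>R axis j 1)) differentiable (at 0)"
  shows "((\<lambda>s. h (x + s *\<^sub>R axis j 1)) has_vector_derivative pd j h (x + t *\<^sub>R axis j 1)) (at t)"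
proof -
  define y where "y = x + t *\<^sub>R axis j 1"
  have "((\<lambda>s. h (y + s *\<^sub>R axis j 1)) has_vector_derivative pd j h y) (at ((\<lambda>s. s - t) t))"
    using assms[of y] unfolding pd_def by (simp add: vector_derivative_works[symmetric])
  moreover have "((\<lambda>s::real. s - t) has_vector_derivative 1) (at t)"
    by (auto intro!: derivative_eq_intros)
  ultimately have "(((\<lambda>s. h (y + s *\<^sub>R axis j 1)) \<circ> (\<lambda>s. s - t)) has_vector_derivative pd j h y) (at t)"
    using vector_diff_chain_at by fastforce
  moreover have "(\<lambda>s. h (y + s *\<^sub>R axis j 1)) \<circ> (\<lambda>s. s - t) = (\<lambda>s. h (x + s *\<^sub>R axis j 1))"
    by (rule ext) (simp add: y_def algebra_simps scaleR_diff_left)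
  ultimately show ?thesis
    by (simp add: y_def)
qed

lemma difference_quotient_bound:
  fixes g :: "real \<Rightarrow> 'a::real_normed_vector"
  assumes "s > 0"
    and "\<And>t. t \<in> {0..s} \<Longrightarrow> (g has_vector_derivative g' t) (at t)"
    and "\<And>t. t \<in> {0..s} \<Longrightarrow> norm (g' t - g' 0) \<le> \<epsilon>"
  shows "norm ((g s - g 0) /\<^sub>R s - g' 0) \<le> \<epsilon>"
proof -
  have "norm (g s - g 0 - (\<lambda>u. u *\<^sub>R g' 0) (s - 0)) \<le> norm (s - 0) * \<epsilon>"
  proof (rule differentiable_bound_linearization[where S = "{0..s}" and f' = "\<lambda>t u. u *\<^sub>R g' t"])
    show "0 + t *\<^sub>R (s - 0) \<in> {0..s}" if "t \<in> {0..1}" for t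
      using that assms(1) by (auto simp: mult_left_le_one_le)
    show "(g has_derivative (\<lambda>u. u *\<^sub>R g' t)) (at t within {0..s})" if "t \<in> {0..s}" for t
      using assms(2)[OF that] by (simp add: has_vector_derivative_def has_derivative_at_withinI)
    show "onorm ((\<lambda>u. u *\<^sub>R g' t) - (\<lambda>u. u *\<^sub>R g' 0)) \<le> \<epsilon>" if "t \<in> {0..s}" for t
      using assms(3)[OF that]
      by (simp add: fun_diff_def scaleR_diff_right[symmetric] onorm_scaleR_left onorm_id)
  qed (use assms(1) in auto)
  moreover have "(g s - g 0) /\<^sub>R s - g' 0 = (g s - g 0 - s *\<^sub>R g' 0) /\<^sub>R s"
    using assms(1) by (simp add: scaleR_diff_right)
  ultimately show ?thesis
    using assms(1) by (simp add: inverse_eq_divide pos_divide_le_eq mult.commute)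
qed

lemma nonpos_if_le_eps_mult:
  fixes x c :: real
  assumes "\<And>\<epsilon>. \<epsilon> > 0 \<Longrightarrow> x \<le> \<epsilon> * c"
  shows "x \<le> 0"
proof (rule field_le_epsilon)
  fix \<epsilon> :: real
  assume "\<epsilon> > 0"
  show "x \<le> 0 + \<epsilon>"
  proof (cases "c > 0")
    case True
    then show ?thesis
      using assms[of "\<epsilon> / c"] \<open>\<epsilon> > 0\<close> by simp
  next
    case False
    then show ?thesis
      using assms[of 1] \<open>\<epsilon> > 0\<close> by simp
  qed
qed

lemma difference_quotient_uniform_approx:
  fixes h :: "real^'n::finite \<Rightarrow> complex"
  assumes dif: "\<And>y. (\<lambda>s. h (y + s *\<^sub>R axis j 1)) differentiable (at 0)"
    and cont_pd: "continuous_on UNIV (pd j h)" and "\<epsilon> > 0"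
  obtains s where "0 < s" and "s \<le> 1"
    and "\<And>x. x \<in> torus_box \<Longrightarrow> norm ((h (x + s *\<^sub>R axis j 1) - h x) /\<^sub>R s - pd j h x) \<le> \<epsilon>"
proof -
  define e :: "real^'n" where "e = axis j 1"
  define K :: "(real^'n) set" where "K = cbox 0 ((\<chi> i. 2*pi) + e)"
  have "uniformly_continuous_on K (pd j h)"
    unfolding K_def by (rule compact_uniformly_continuous[OF continuous_on_subset[OF cont_pd]]) auto
  then obtain d where "d > 0"
    and d: "\<And>x x'. x \<in> K \<Longrightarrow> x' \<in> K \<Longrightarrow> dist x' x < d \<Longrightarrow> dist (pd j h x') (pd j h x) < \<epsilon>"
    using \<open>\<epsilon> > 0\<close> unfolding uniformly_continuous_on_def by metis
  have in_K: "x + t *\<^sub>R e \<in> K" if "x \<in> torus_box" "0 \<le> t" "t \<le> 1" for x t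
    using that pi_gt3 by (auto simp: K_def mem_box_cart e_def axis_def) (smt (verit))
  define s where "s = min (d/2) 1"
  have s: "0 < s" "s < d" "s \<le> 1"
    using \<open>d > 0\<close> by (auto simp: s_def)
  have "norm ((h (x + s *\<^sub>R e) - h (x + 0 *\<^sub>R e)) /\<^sub>R s - pd j h (x + 0 *\<^sub>R e)) \<le> \<epsilon>"
    if x: "x \<in> torus_box" for x
  proof (rule difference_quotient_bound)
    show "((\<lambda>t. h (x + t *\<^sub>R e)) has_vector_derivative pd j h (x + t *\<^sub>R e)) (at t)" for t
      unfolding e_def by (rule has_vector_derivative_pd_line[OF dif])
    show "norm (pd j h (x + t *\<^sub>R e) - pd j h (x + 0 *\<^sub>R e)) \<le> \<epsilon>" if "t \<in> {0..s}" for t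
      using d[OF in_K[OF x, of 0] in_K[OF x, of t]] that s
      by (simp add: dist_norm e_def less_imp_le)
  qed (use s in auto)
  then show ?thesis
    using that[OF s(1,3)] by (simp add: e_def)
qed

lemma integral_pd_periodic_eq_0:
  fixes h :: "real^'n::finite \<Rightarrow> complex"
  assumes cont: "continuous_on UNIV h"
    and per: "\<And>x. h (x + (2*pi) *\<^sub>R axis j 1) = h x"
    and dif: "\<And>y. (\<lambda>s. h (y + s *\<^sub>R axis j 1)) differentiable (at 0)"
    and cont_pd: "continuous_on UNIV (pd j h)"
  shows "integral torus_box (pd j h) = 0"
proof -
  define D where "D = pd j h"
  have int_D: "D integrable_on torus_box"
    unfolding D_def by (rule integrable_continuous[OF continuous_on_subset[OF cont_pd]]) auto
  have int_shift: "(\<lambda>x. h (x + c)) integrable_on torus_box" for c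
    by (rule integrable_continuous, rule continuous_on_subset[where s=UNIV])
       (auto intro!: continuous_on_compose2[OF cont] continuous_intros)
  have "norm (integral torus_box D) \<le> \<epsilon> * measure lborel (torus_box :: (real^'n) set)" if "\<epsilon> > 0" for \<epsilon>
  proof -
    obtain s where s: "0 < s" "s \<le> 1"
      and approx: "\<And>x. x \<in> torus_box \<Longrightarrow> norm ((h (x + s *\<^sub>R axis j 1) - h x) /\<^sub>R s - D x) \<le> \<epsilon>"
      using difference_quotient_uniform_approx[OF dif cont_pd \<open>\<epsilon> > 0\<close>] unfolding D_def by blast
    define Q where "Q x = (h (x + s *\<^sub>R axis j 1) - h x) /\<^sub>R s" for x
    have int_Q: "Q integrable_on torus_box"
      unfolding Q_def using int_shift[of "s *\<^sub>R axis j 1"] int_shift[of 0]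
      by (auto intro!: integrable_diff integrable_cmul)
    have "integral torus_box Q = 0"
      using integral_torus_box_shift[OF cont per, of s] s pi_gt3 int_shift[of "s *\<^sub>R axis j 1"] int_shift[of 0]
      by (simp add: Q_def[abs_def] integral_diff)
    then have "norm (integral torus_box D) = norm (integral torus_box (\<lambda>x. Q x - D x))"
      by (simp add: integral_diff[OF int_Q int_D])
    also have "\<dots> \<le> integral (torus_box :: (real^'n) set) (\<lambda>x. \<epsilon>)"
      by (rule integral_norm_bound_integral[OF integrable_diff[OF int_Q int_D] integrable_const])
         (use approx in \<open>simp add: Q_def\<close>)
    finally show ?thesis
      by (simp add: mult.commute)
  qed
  then have "norm (integral torus_box D) \<le> 0"
    by (rule nonpos_if_le_eps_mult)
  then show ?thesis
    by (simp add: D_def)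
qed


section \<open>Fourier coefficients of smooth functions\<close>

lemma torus_smooth_continuous_on: "torus_smooth \<psi> \<Longrightarrow> continuous_on A \<psi>"
  unfolding torus_smooth_def smooth_fun_def
  by (metis dpar_Nil continuous_on_subset subset_UNIV)

lemma torus_smooth_line_differentiable:
  "torus_smooth \<psi> \<Longrightarrow> (\<lambda>s. \<psi> (y + s *\<^sub>R axis j 1)) differentiable (at 0)"
  unfolding torus_smooth_def smooth_fun_def by (metis dpar_Nil)

lemma torus_smooth_periodic: "torus_smooth \<psi> \<Longrightarrow> \<psi> (x + (2*pi) *\<^sub>R axis j 1) = \<psi> x"
  unfolding torus_smooth_def torus_periodic_def by blast

lemma torus_periodic_pd:
  assumes "torus_periodic f"
  shows "torus_periodic (pd j f)"
  unfolding torus_periodic_def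
proof (intro allI)
  fix i x
  have "f (x + (2*pi) *\<^sub>R axis i 1 + s *\<^sub>R axis j 1) = f (x + s *\<^sub>R axis j 1)" for s
    using assms unfolding torus_periodic_def by (metis add.assoc add.commute)
  then show "pd j f (x + (2*pi) *\<^sub>R axis i 1) = pd j f x"
    by (simp add: pd_def)
qed

lemma torus_periodic_dpar: "torus_periodic f \<Longrightarrow> torus_periodic (dpar js f)"
  by (induction js) (auto intro: torus_periodic_pd)

lemma torus_smooth_dpar: "torus_smooth \<psi> \<Longrightarrow> torus_smooth (dpar js \<psi>)"
  unfolding torus_smooth_def smooth_fun_def
  by (auto simp: dpar_append[symmetric] intro: torus_periodic_dpar)

lemma torus_smooth_pd: "torus_smooth \<psi> \<Longrightarrow> torus_smooth (pd j \<psi>)"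
  using torus_smooth_dpar[of \<psi> "[j]"] by simp

lemma has_vector_derivative_line_mult:
  assumes "(\<lambda>s. f (x + s *\<^sub>R axis j 1)) differentiable (at 0)"
    and "(\<lambda>s. g (x + s *\<^sub>R axis j 1)) differentiable (at 0)"
  shows "((\<lambda>s. f (x + s *\<^sub>R axis j 1) * g (x + s *\<^sub>R axis j 1)) has_vector_derivative
           (f x * pd j g x + pd j f x * g x)) (at 0)"
proof -
  have "((\<lambda>s. f (x + s *\<^sub>R axis j 1)) has_vector_derivative pd j f x) (at 0)"
    and "((\<lambda>s. g (x + s *\<^sub>R axis j 1)) has_vector_derivative pd j g x) (at 0)"
    using assms unfolding pd_def by (simp_all add: vector_derivative_works[symmetric])
  from has_vector_derivative_mult[OF this] show ?thesis
    by simp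
qed

lemma dist_of_pd_torus_char:
  assumes "torus_smooth \<psi>"
  shows "dist_of (pd j \<psi>) (torus_char k) = - (\<i> * of_int (k j)) * dist_of \<psi> (torus_char k)"
proof -
  define h where "h x = \<psi> x * torus_char k x" for x
  have pd_h: "pd j h x = pd j \<psi> x * torus_char k x + \<i> * of_int (k j) * (\<psi> x * torus_char k x)" for x
    using vector_derivative_at[OF has_vector_derivative_line_mult[OF
          torus_smooth_line_differentiable[OF assms] torus_char_line_differentiable, of x j k]]
    unfolding pd_def[of j h] h_def by (simp add: pd_torus_char algebra_simps)
  have cont_pd: "continuous_on A (pd j \<psi>)" for A
    by (rule torus_smooth_continuous_on[OF torus_smooth_pd[OF assms]])
  have "integral torus_box (pd j h) = 0"
  proof (rule integral_pd_periodic_eq_0)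
    show "continuous_on UNIV h"
      unfolding h_def by (intro continuous_intros torus_smooth_continuous_on[OF assms])
    show "h (x + (2 * pi) *\<^sub>R axis j 1) = h x" for x
      unfolding h_def by (simp add: torus_smooth_periodic[OF assms] torus_char_periodic)
    show "(\<lambda>s. h (y + s *\<^sub>R axis j 1)) differentiable at 0" for y
      unfolding h_def
      by (rule differentiableI_vector[OF has_vector_derivative_line_mult[OF
            torus_smooth_line_differentiable[OF assms] torus_char_line_differentiable]])
    show "continuous_on UNIV (pd j h)"
      unfolding pd_h by (intro continuous_intros cont_pd torus_smooth_continuous_on[OF assms])
  qed
  moreover have "integral torus_box (pd j h) =
      dist_of (pd j \<psi>) (torus_char k) + \<i> * of_int (k j) * dist_of \<psi> (torus_char k)"
    unfolding pd_h dist_of_def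
    by (subst integral_add)
       (auto intro!: integrable_continuous continuous_intros cont_pd
         torus_smooth_continuous_on[OF assms])
  ultimately show ?thesis
    by (simp add: algebra_simps eq_neg_iff_add_eq_0)
qed

lemma dist_of_dpar_torus_char:
  assumes "torus_smooth \<psi>"
  shows "dist_of (dpar js \<psi>) (torus_char k) = dpar_symbol js (- k) * dist_of \<psi> (torus_char k)"
proof (induction js)
  case Nil
  then show ?case by (simp add: dpar_symbol_def)
next
  case (Cons j js)
  then show ?case
    by (simp add: dist_of_pd_torus_char[OF torus_smooth_dpar[OF assms]] dpar_symbol_Cons)
qed

lemma norm_dist_of_torus_char_le:
  fixes f :: "real^'n::finite \<Rightarrow> complex"
  assumes "continuous_on UNIV f" and "\<And>x. x \<in> torus_box \<Longrightarrow> norm (f x) \<le> B"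
  shows "norm (dist_of f (torus_char k)) \<le> (2*pi) ^ CARD('n) * B"
proof -
  have "norm (dist_of f (torus_char k)) \<le> integral (torus_box :: (real^'n) set) (\<lambda>x. B)"
    unfolding dist_of_def
    by (rule integral_norm_bound_integral)
       (auto simp: norm_mult assms(2)
         intro!: integrable_continuous continuous_intros continuous_on_subset[OF assms(1)])
  also have "\<dots> = (2*pi) ^ CARD('n) * B"
    by (simp add: content_torus_box)
  finally show ?thesis .
qed

definition rapidly_decreasing :: "(('n::finite \<Rightarrow> int) \<Rightarrow> complex) \<Rightarrow> bool" where
  "rapidly_decreasing v \<longleftrightarrow> (\<forall>m. \<exists>C. \<forall>k. norm (v k) * (1 + freq_norm k) ^ m \<le> C)"

text \<open>The coefficient at \<open>k\<close> of \<open>\<partial>\<^sub>i\<^sup>m \<psi>\<close> is \<open>(-\<i> k\<^sub>i)\<^sup>m\<close> times that of \<open>\<psi>\<close>, and all of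
  them are bounded.\<close>

lemma rapidly_decreasing_dist_of_torus_char:
  fixes \<psi> :: "real^'n::finite \<Rightarrow> complex"
  assumes "torus_smooth \<psi>"
  shows "rapidly_decreasing (\<lambda>k. dist_of \<psi> (torus_char k))"
  unfolding rapidly_decreasing_def
proof
  fix m
  define V where "V = (2*pi::real) ^ CARD('n)"
  define c where "c = (1 + real CARD('n)) ^ m"
  have "\<forall>js. \<exists>B. \<forall>x\<in>torus_box. norm (dpar js \<psi> x) \<le> B"
    using continuous_on_compact_bound[OF compact_cbox
        torus_smooth_continuous_on[OF torus_smooth_dpar[OF assms]]] by metis
  then obtain B where B: "\<And>js x. x \<in> torus_box \<Longrightarrow> norm (dpar js \<psi> x) \<le> B js"
    by metis
  have coeff_le: "norm (dist_of (dpar js \<psi>) (torus_char k)) \<le> V * B js" for js k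
    unfolding V_def
    by (rule norm_dist_of_torus_char_le[OF torus_smooth_continuous_on[OF torus_smooth_dpar[OF assms]] B])
  have "norm (dist_of \<psi> (torus_char k)) * (1 + freq_norm k) ^ m \<le>
      c * (V * B [] + (\<Sum>i\<in>UNIV. V * B (replicate m i)))" for k
  proof -
    have rep: "norm (dist_of (dpar (replicate m i) \<psi>) (torus_char k)) =
        \<bar>real_of_int (k i)\<bar> ^ m * norm (dist_of \<psi> (torus_char k))" for i
      by (simp add: dist_of_dpar_torus_char[OF assms] norm_mult norm_dpar_symbol_replicate)
    have "norm (dist_of \<psi> (torus_char k)) * (1 + freq_norm k) ^ m \<le>
        norm (dist_of \<psi> (torus_char k)) * (c * (1 + (\<Sum>i\<in>UNIV. \<bar>real_of_int (k i)\<bar> ^ m)))"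
      unfolding c_def by (rule mult_left_mono[OF freq_norm_power_le]) simp
    also have "\<dots> = c * (norm (dist_of (dpar [] \<psi>) (torus_char k)) +
        (\<Sum>i\<in>UNIV. norm (dist_of (dpar (replicate m i) \<psi>) (torus_char k))))"
      by (simp add: rep sum_distrib_left distrib_left mult_ac)
    also have "\<dots> \<le> c * (V * B [] + (\<Sum>i\<in>UNIV. V * B (replicate m i)))"
      unfolding c_def by (intro mult_left_mono add_mono sum_mono coeff_le) auto
    finally show ?thesis .
  qed
  then show "\<exists>C. \<forall>k. norm (dist_of \<psi> (torus_char k)) * (1 + freq_norm k) ^ m \<le> C"
    by blast
qed


section \<open>Completeness of the characters\<close>

inductive trig_poly :: "(real^'n::finite \<Rightarrow> complex) \<Rightarrow> bool" where
  trig_poly_char: "trig_poly (\<lambda>x. c * torus_char k x)"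
| trig_poly_add: "trig_poly F \<Longrightarrow> trig_poly G \<Longrightarrow> trig_poly (\<lambda>x. F x + G x)"

lemma trig_poly_const: "trig_poly (\<lambda>x. c)"
  using trig_poly_char[of c "\<lambda>i. 0"] by simp

lemma trig_poly_mult: "trig_poly F \<Longrightarrow> trig_poly G \<Longrightarrow> trig_poly (\<lambda>x. F x * G x)"
proof (induction rule: trig_poly.induct)
  case (trig_poly_char c k)
  show ?case
    using trig_poly_char
  proof (induction rule: trig_poly.induct)
    case (trig_poly_char d l)
    then show ?case
      using trig_poly.trig_poly_char[of "c * d" "\<lambda>i. k i + l i"]
      by (simp add: torus_char_mult[symmetric] algebra_simps)
  next
    case (trig_poly_add F G)
    then show ?case
      using trig_poly.trig_poly_add[OF trig_poly_add.IH] by (simp add: algebra_simps)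
  qed
next
  case (trig_poly_add F1 F2)
  then show ?case
    using trig_poly.trig_poly_add[OF trig_poly_add.IH] by (simp add: algebra_simps)
qed

lemma trig_poly_sum:
  "finite A \<Longrightarrow> (\<And>a. a \<in> A \<Longrightarrow> trig_poly (F a)) \<Longrightarrow> trig_poly (\<lambda>x. \<Sum>a\<in>A. F a x)"
  by (induction A rule: finite_induct) (auto intro: trig_poly_const trig_poly_add)

lemma continuous_on_trig_poly: "trig_poly F \<Longrightarrow> continuous_on A F"
  by (induction rule: trig_poly.induct) (auto intro!: continuous_intros)

definition torus_embedding :: "real^'n::finite \<Rightarrow> complex^'n" where
  "torus_embedding x = (\<chi> i. exp (\<i> * of_real (x$i)))"

lemma continuous_on_torus_embedding: "continuous_on A torus_embedding"
  unfolding torus_embedding_def by (intro continuous_intros)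

lemma torus_char_coordinate:
  "torus_char (\<lambda>l. if l = i then c else 0) x = exp (\<i> * of_real (of_int c * x$i))"
proof -
  have "(\<Sum>l\<in>UNIV. real_of_int (if l = i then c else 0) * x $ l) =
      (\<Sum>l\<in>UNIV. if l = i then of_int c * x$i else 0)"
    by (rule sum.cong) auto
  then have "(\<Sum>l\<in>UNIV. real_of_int (if l = i then c else 0) * x $ l) = of_int c * x$i"
    by simp
  then show ?thesis
    by (simp add: torus_char_def)
qed

lemma cnj_torus_char: "cnj (torus_char k x) = torus_char (- k) x"
  by (simp add: torus_char_def exp_cnj sum_negf)

lemma trig_poly_inner_Basis:
  fixes b :: "complex^'n::finite"
  assumes "b \<in> Basis"
  shows "trig_poly (\<lambda>x. complex_of_real (torus_embedding x \<bullet> b))"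
proof -
  from assms obtain i u where b: "b = axis i u" and u: "u = 1 \<or> u = \<i>"
    unfolding Basis_vec_def by (auto simp: Basis_complex_def)
  define w where "w x = exp (\<i> * of_real (x$i))" for x :: "real^'n"
  have w: "w x = torus_char (\<lambda>l. if l = i then 1 else 0) x" for x
    by (simp add: w_def torus_char_coordinate)
  have re: "complex_of_real (Re z) = 1/2 * z + 1/2 * cnj z"
    and im: "complex_of_real (Im z) = - \<i>/2 * z + \<i>/2 * cnj z" for z
    by (simp_all add: complex_eq_iff)
  have "complex_of_real (torus_embedding x \<bullet> b) = (cnj u / 2) * w x + (u / 2) * cnj (w x)" for x
    using u by (elim disjE) (simp_all add: b inner_axis torus_embedding_def w_def re im)
  then have eq: "(\<lambda>x. complex_of_real (torus_embedding x \<bullet> b)) =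
      (\<lambda>x. (cnj u / 2) * torus_char (\<lambda>l. if l = i then 1 else 0) x +
           (u / 2) * torus_char (- (\<lambda>l. if l = i then 1 else 0)) x)"
    unfolding w cnj_torus_char by (rule ext)
  show ?thesis
    unfolding eq by (rule trig_poly_add[OF trig_poly_char trig_poly_char])
qed

lemma trig_poly_real_polynomial_function:
  fixes p :: "complex^'n::finite \<Rightarrow> real"
  shows "real_polynomial_function p \<Longrightarrow> trig_poly (\<lambda>x. complex_of_real (p (torus_embedding x)))"
proof (induction rule: real_polynomial_function.induct)
  case (linear f)
  have f_expand: "f z = (\<Sum>b\<in>Basis. (z \<bullet> b) * f b)" for z
  proof -
    have "f z = f (\<Sum>b\<in>Basis. (z \<bullet> b) *\<^sub>R b)"
      by (simp add: euclidean_representation)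
    then show ?thesis
      using bounded_linear.linear[OF linear] by (simp add: linear_sum linear_scale)
  qed
  have "(\<lambda>x. complex_of_real (f (torus_embedding x))) =
      (\<lambda>x. \<Sum>b\<in>Basis. complex_of_real (torus_embedding x \<bullet> b) * complex_of_real (f b))"
    by (subst f_expand) (simp only: of_real_sum of_real_mult)
  moreover have "trig_poly (\<lambda>x. \<Sum>b\<in>Basis. complex_of_real (torus_embedding x \<bullet> b) * complex_of_real (f b))"
    by (intro trig_poly_sum trig_poly_mult trig_poly_inner_Basis trig_poly_const) auto
  ultimately show ?case
    by simp
next
  case (const c)
  then show ?case
    by (rule trig_poly_const)
next
  case (add f g)
  then show ?case
    by (simp add: trig_poly_add)
next
  case (mult f g)
  then show ?case
    by (simp add: trig_poly_mult)
qed

lemma trig_poly_polynomial_function: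
  fixes g :: "complex^'n::finite \<Rightarrow> complex"
  assumes "polynomial_function g"
  shows "trig_poly (\<lambda>x. g (torus_embedding x))"
proof -
  have "real_polynomial_function (\<lambda>z. g z \<bullet> 1)" and "real_polynomial_function (\<lambda>z. g z \<bullet> \<i>)"
    using assms unfolding polynomial_function_iff_Basis_inner by (auto simp: Basis_complex_def)
  from trig_poly_add[OF trig_poly_real_polynomial_function[OF this(1)]
      trig_poly_mult[OF trig_poly_const[of \<i>] trig_poly_real_polynomial_function[OF this(2)]]]
  show ?thesis
    by (simp only: complex_inner_1_right complex_inner_i_right complex_eq[symmetric])
qed

lemma torus_periodic_shift_int:
  fixes h :: "real^'n::finite \<Rightarrow> complex"
  assumes "torus_periodic h"
  shows "h (x + (2*pi * of_int m) *\<^sub>R axis j 1) = h x"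
proof (induction m rule: int_induct[where k = 0])
  case (step1 i)
  have "h (x + (2*pi * of_int (i + 1)) *\<^sub>R axis j 1) =
      h ((x + (2*pi * of_int i) *\<^sub>R axis j 1) + (2*pi) *\<^sub>R axis j 1)"
    by (simp add: algebra_simps)
  also have "\<dots> = h x"
    using step1 assms by (simp add: torus_periodic_def)
  finally show ?case .
next
  case (step2 i)
  have "h (x + (2*pi * of_int (i - 1)) *\<^sub>R axis j 1) =
      h ((x + (2*pi * of_int (i - 1)) *\<^sub>R axis j 1) + (2*pi) *\<^sub>R axis j 1)"
    using assms by (simp add: torus_periodic_def)
  also have "\<dots> = h x"
    using step2 by (simp add: algebra_simps)
  finally show ?case .
qed simp

lemma torus_periodic_shift_lattice:
  fixes h :: "real^'n::finite \<Rightarrow> complex"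
  assumes "torus_periodic h"
  shows "h (x + (\<chi> i. 2*pi * of_int (m i))) = h x"
proof -
  have "h (x + (\<Sum>j\<in>S. (2*pi * of_int (m j)) *\<^sub>R axis j 1)) = h x" if "finite S" for S
    using that
  proof (induction S rule: finite_induct)
    case (insert j S)
    have "x + (\<Sum>j\<in>insert j S. (2*pi * of_int (m j)) *\<^sub>R axis j 1) =
        (x + (\<Sum>j\<in>S. (2*pi * of_int (m j)) *\<^sub>R axis j 1)) + (2*pi * of_int (m j)) *\<^sub>R axis j 1"
      using insert(1,2) by (simp add: algebra_simps)
    then show ?case
      using torus_periodic_shift_int[OF assms] insert(3) by (simp only:)
  qed simp
  moreover have "(\<chi> i. 2*pi * of_int (m i)) = (\<Sum>j\<in>UNIV. (2*pi * of_int (m j)) *\<^sub>R axis j (1::real))"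
    using basis_expansion[of "(\<chi> i. 2*pi * of_int (m i)) :: real^'n"]
    by (simp add: scalar_mult_eq_scaleR)
  ultimately show ?thesis
    by simp
qed

lemma torus_box_representative:
  fixes x :: "real^'n::finite"
  obtains y m where "y \<in> torus_box" and "x = y + (\<chi> i. 2*pi * of_int (m i))"
proof
  define m where "m i = \<lfloor>x$i / (2*pi)\<rfloor>" for i
  show "x - (\<chi> i. 2*pi * of_int (m i)) \<in> torus_box"
    unfolding mem_box_cart
  proof (intro allI conjI)
    fix i
    have "of_int (m i) \<le> x$i / (2*pi)" and "x$i / (2*pi) < of_int (m i) + 1"
      unfolding m_def by linarith+
    then show "(0::real^'n) $ i \<le> (x - (\<chi> i. 2*pi * of_int (m i))) $ i"
      and "(x - (\<chi> i. 2*pi * of_int (m i))) $ i \<le> (\<chi> i. 2*pi) $ i"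
      by (simp_all add: field_simps)
  qed
qed simp

lemma torus_periodic_eq_if_torus_embedding_eq:
  fixes h :: "real^'n::finite \<Rightarrow> complex"
  assumes "torus_periodic h" and "torus_embedding x = torus_embedding y"
  shows "h x = h y"
proof -
  have "\<exists>n::int. x$i = y$i + 2*pi * of_int n" for i
  proof -
    from assms(2) have "exp (\<i> * of_real (x$i)) = exp (\<i> * of_real (y$i))"
      unfolding torus_embedding_def vec_eq_iff by simp
    then obtain n :: int where "\<i> * of_real (x$i) = \<i> * of_real (y$i) + (of_int (2 * n) * pi) * \<i>"
      unfolding exp_eq by blast
    then have "x$i = y$i + 2*pi * of_int n"
      by (simp add: complex_eq_iff)
    then show ?thesis ..
  qed
  then obtain m where "\<And>i. x$i = y$i + 2*pi * of_int (m i)"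
    by metis
  then have "x = y + (\<chi> i. 2*pi * of_int (m i))"
    by (simp add: vec_eq_iff)
  then show ?thesis
    using torus_periodic_shift_lattice[OF assms(1)] by simp
qed

text \<open>Restricted to the compact period box, the embedding is a quotient map onto its image.\<close>

lemma torus_periodic_factor_torus_embedding:
  fixes h :: "real^'n::finite \<Rightarrow> complex"
  assumes "continuous_on UNIV h" and "torus_periodic h"
  obtains H where "continuous_on (torus_embedding ` torus_box) H"
    and "\<And>x. x \<in> torus_box \<Longrightarrow> H (torus_embedding x) = h x"
proof
  define K :: "(complex^'n) set" where "K = torus_embedding ` torus_box"
  define H where "H z = h (inv_into torus_box torus_embedding z)" for z
  show H_emb: "H (torus_embedding x) = h x" if "x \<in> torus_box" for x
    unfolding H_def using that
    by (intro torus_periodic_eq_if_torus_embedding_eq[OF assms(2)] f_inv_into_f) auto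
  have quotient: "quotient_map (top_of_set torus_box) (top_of_set K) torus_embedding"
  proof (rule continuous_imp_quotient_map)
    show "continuous_map (top_of_set torus_box) (top_of_set K) torus_embedding"
      by (simp add: continuous_map_in_subtopology continuous_on_torus_embedding K_def)
    show "compact_space (top_of_set (torus_box :: (real^'n) set))"
      by (rule compact_space_subtopology) simp
    show "Hausdorff_space (top_of_set K)"
      by (rule Hausdorff_space_subtopology) simp
    show "torus_embedding ` topspace (top_of_set torus_box) = topspace (top_of_set K)"
      by (simp add: K_def)
  qed
  have "continuous_on torus_box (H \<circ> torus_embedding)"
    by (rule continuous_on_eq[OF continuous_on_subset[OF assms(1)]]) (simp_all add: H_emb)
  then have "continuous_map (top_of_set torus_box) euclidean (H \<circ> torus_embedding)"
    by simp
  from continuous_compose_quotient_map[OF quotient this]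
  show "continuous_on (torus_embedding ` torus_box) H"
    by (simp add: K_def)
qed

lemma trig_poly_approx:
  fixes h :: "real^'n::finite \<Rightarrow> complex"
  assumes "continuous_on UNIV h" and "torus_periodic h" and "\<epsilon> > 0"
  obtains F where "trig_poly F" and "\<And>x. x \<in> torus_box \<Longrightarrow> norm (h x - F x) < \<epsilon>"
proof -
  obtain H where H: "continuous_on (torus_embedding ` torus_box) H"
    "\<And>x. x \<in> torus_box \<Longrightarrow> H (torus_embedding x) = h x"
    using torus_periodic_factor_torus_embedding[OF assms(1,2)] by blast
  have "compact (torus_embedding ` (torus_box :: (real^'n) set))"
    by (intro compact_continuous_image continuous_on_torus_embedding compact_cbox)
  from Stone_Weierstrass_polynomial_function[OF this H(1) assms(3)]
  obtain g where g: "polynomial_function g"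
    and g_approx: "\<And>z. z \<in> torus_embedding ` torus_box \<Longrightarrow> norm (H z - g z) < \<epsilon>"
    by blast
  show ?thesis
  proof (rule that[OF trig_poly_polynomial_function[OF g]])
    show "norm (h x - g (torus_embedding x)) < \<epsilon>" if "x \<in> torus_box" for x
      using g_approx[of "torus_embedding x"] H(2)[OF that] that by auto
  qed
qed

lemma dist_of_trig_poly_eq_0:
  fixes h :: "real^'n::finite \<Rightarrow> complex"
  assumes "continuous_on UNIV h" and "\<And>k. dist_of h (torus_char k) = 0"
  shows "trig_poly F \<Longrightarrow> dist_of h F = 0"
proof (induction rule: trig_poly.induct)
  case (trig_poly_char c k)
  then show ?case
    using assms(2)[of k] by (simp add: dist_of_def algebra_simps)
next
  case (trig_poly_add F G)
  have "(\<lambda>x. h x * G x) integrable_on torus_box" if "trig_poly G" for G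
    using continuous_on_trig_poly[OF that]
    by (intro integrable_continuous continuous_intros continuous_on_subset[OF assms(1)]) auto
  with trig_poly_add show ?case
    unfolding dist_of_def distrib_left by (simp add: integral_add)
qed

lemma eq_0_if_dist_of_cnj_eq_0:
  fixes h :: "real^'n::finite \<Rightarrow> complex"
  assumes "continuous_on UNIV h" and "dist_of h (\<lambda>x. cnj (h x)) = 0" and "x \<in> torus_box"
  shows "h x = 0"
proof -
  have cont: "continuous_on torus_box (\<lambda>x. (norm (h x))\<^sup>2)"
    by (intro continuous_intros continuous_on_subset[OF assms(1)]) auto
  have "((\<lambda>x. complex_of_real ((norm (h x))\<^sup>2)) has_integral
      complex_of_real (integral torus_box (\<lambda>x. (norm (h x))\<^sup>2))) torus_box"
    by (rule has_integral_of_real[OF integrable_integral[OF integrable_continuous[OF cont]]])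
  then have "integral torus_box (\<lambda>x. (norm (h x))\<^sup>2) = 0"
    using assms(2) unfolding dist_of_def complex_norm_square[symmetric]
    by (simp add: integral_unique)
  moreover have "box 0 (\<chi> i. 2*pi) \<noteq> ({} :: (real^'n) set)"
    by (simp add: box_ne_empty Basis_vec_def cart_eq_inner_axis[symmetric] inner_axis)
  ultimately show ?thesis
    using integral_cbox_eq_0_iff[OF cont] assms(3) by simp
qed

theorem torus_periodic_eq_0_if_dist_of_torus_char_eq_0:
  fixes h :: "real^'n::finite \<Rightarrow> complex"
  assumes cont: "continuous_on UNIV h" and per: "torus_periodic h"
    and coeffs: "\<And>k. dist_of h (torus_char k) = 0"
  shows "h x = 0"
proof -
  obtain B where B: "\<And>x. x \<in> torus_box \<Longrightarrow> norm (h x) \<le> B"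
    using continuous_on_compact_bound[OF compact_cbox continuous_on_subset[OF cont]] by blast
  have "norm (dist_of h (\<lambda>x. cnj (h x))) \<le> \<epsilon> * ((2*pi) ^ CARD('n) * B)" if "\<epsilon> > 0" for \<epsilon>
  proof -
    have cont_cnj: "continuous_on UNIV (\<lambda>x. cnj (h x))"
      using cont by (intro continuous_intros)
    moreover have "torus_periodic (\<lambda>x. cnj (h x))"
      using per by (simp add: torus_periodic_def)
    ultimately obtain F where F: "trig_poly F"
      and approx: "\<And>x. x \<in> torus_box \<Longrightarrow> norm (cnj (h x) - F x) < \<epsilon>"
      using trig_poly_approx \<open>\<epsilon> > 0\<close> by metis
    have int: "(\<lambda>x. h x * G x) integrable_on torus_box" if "continuous_on UNIV G" for G
      by (intro integrable_continuous continuous_intros continuous_on_subset[OF cont]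
          continuous_on_subset[OF that]) auto
    have "dist_of h (\<lambda>x. cnj (h x)) = integral torus_box (\<lambda>x. h x * (cnj (h x) - F x))"
      using dist_of_trig_poly_eq_0[OF cont coeffs F] int[OF cont_cnj]
        int[OF continuous_on_trig_poly[OF F]]
      unfolding dist_of_def by (simp add: right_diff_distrib integral_diff)
    also have "norm \<dots> \<le> integral (torus_box :: (real^'n) set) (\<lambda>x. B * \<epsilon>)"
    proof (rule integral_norm_bound_integral[OF int integrable_const])
      show "continuous_on UNIV (\<lambda>x. cnj (h x) - F x)"
        by (intro continuous_intros cont_cnj continuous_on_trig_poly[OF F])
      show "norm (h x * (cnj (h x) - F x)) \<le> B * \<epsilon>" if "x \<in> torus_box" for x
        using B[OF that] approx[OF that] order_trans[OF norm_ge_zero B[OF that]]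
        by (simp add: norm_mult mult_mono less_imp_le)
    qed
    also have "\<dots> = \<epsilon> * ((2*pi) ^ CARD('n) * B)"
      by (simp add: content_torus_box)
    finally show ?thesis .
  qed
  then have "norm (dist_of h (\<lambda>x. cnj (h x))) \<le> 0"
    by (rule nonpos_if_le_eps_mult)
  then have on_box: "h y = 0" if "y \<in> torus_box" for y
    using eq_0_if_dist_of_cnj_eq_0[OF cont _ that] by simp
  obtain y m where "y \<in> torus_box" and "x = y + (\<chi> i. 2*pi * of_int (m i))"
    by (rule torus_box_representative)
  then show ?thesis
    using torus_periodic_shift_lattice[OF per, of y m] on_box by simp
qed


section \<open>Fourier inversion\<close>

definition freq_enum :: "nat \<Rightarrow> ('n::finite \<Rightarrow> int)" where
  "freq_enum = from_nat_into UNIV"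

lemma bij_freq_enum: "bij (freq_enum :: nat \<Rightarrow> ('n::finite \<Rightarrow> int))"
proof -
  have "inj (\<lambda>c::int. \<lambda>_::'n. c)"
    by (rule injI) (metis)
  then have "infinite (UNIV :: ('n \<Rightarrow> int) set)"
    using finite_imageD[OF finite_subset[OF subset_UNIV]] infinite_UNIV_int by blast
  then show ?thesis
    unfolding freq_enum_def by (intro bij_betw_from_nat_into) simp_all
qed

lemma sum_inverse_square_le:
  "(\<Sum>i\<in>{- int R..int R}. 1 / (1 + \<bar>real_of_int i\<bar>)\<^sup>2) \<le> 3 - 2 / (real R + 1)"
proof (induction R)
  case (Suc R)
  have "{- int (Suc R)..int (Suc R)} = insert (- int (Suc R)) (insert (int (Suc R)) {- int R..int R})"
    by auto
  then have "(\<Sum>i\<in>{- int (Suc R)..int (Suc R)}. 1 / (1 + \<bar>real_of_int i\<bar>)\<^sup>2) =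
      2 / (real R + 2)\<^sup>2 + (\<Sum>i\<in>{- int R..int R}. 1 / (1 + \<bar>real_of_int i\<bar>)\<^sup>2)"
    by (simp add: algebra_simps)
  also have "\<dots> \<le> 2 / (real R + 2)\<^sup>2 + (3 - 2 / (real R + 1))"
    using Suc by simp
  also have "\<dots> \<le> 3 - 2 / (real (Suc R) + 1)"
  proof -
    have "2 / (real R + 2)\<^sup>2 + 2 / (real R + 2) \<le> 2 / (real R + 1)"
      by (simp add: divide_simps) (simp add: algebra_simps power2_eq_square)
    then show ?thesis
      by (simp add: algebra_simps)
  qed
  finally show ?case .
qed simp

text \<open>Each weight is at most the product over the coordinates of \<open>1 / (1 + \<bar>k\<^sub>i\<bar>)\<^sup>2\<close>, and
  the sum of such products over a box factorizes.\<close>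

lemma sum_freq_weight_box_le:
  "(\<Sum>k\<in>PiE (UNIV :: 'n::finite set) (\<lambda>_. {- int R..int R}). 1 / (1 + freq_norm k) ^ (2 * CARD('n)))
    \<le> 3 ^ CARD('n)"
proof -
  have w_le: "1 / (1 + freq_norm k) ^ (2 * CARD('n)) \<le> (\<Prod>i\<in>UNIV. 1 / (1 + \<bar>real_of_int (k i)\<bar>)\<^sup>2)"
    for k :: "'n \<Rightarrow> int"
  proof -
    have "1 / (1 + freq_norm k) ^ (2 * CARD('n)) = (\<Prod>i\<in>(UNIV::'n set). 1 / (1 + freq_norm k)\<^sup>2)"
      by (simp add: power_mult power_one_over)
    also have "\<dots> \<le> (\<Prod>i\<in>UNIV. 1 / (1 + \<bar>real_of_int (k i)\<bar>)\<^sup>2)"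
      using abs_le_freq_norm[of k] freq_norm_nonneg[of k]
      by (intro prod_mono) (auto intro!: divide_left_mono power_mono simp: add_pos_nonneg)
    finally show ?thesis .
  qed
  have "(\<Sum>k\<in>PiE (UNIV :: 'n set) (\<lambda>_. {- int R..int R}). 1 / (1 + freq_norm k) ^ (2 * CARD('n))) \<le>
      (\<Sum>k\<in>PiE (UNIV :: 'n set) (\<lambda>_. {- int R..int R}). \<Prod>i\<in>UNIV. 1 / (1 + \<bar>real_of_int (k i)\<bar>)\<^sup>2)"
    by (rule sum_mono) (rule w_le)
  also have "\<dots> = (\<Prod>i\<in>(UNIV::'n set). \<Sum>y\<in>{- int R..int R}. 1 / (1 + \<bar>real_of_int y\<bar>)\<^sup>2)"
    by (rule prod_sum_PiE[symmetric]) auto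
  also have "\<dots> \<le> (\<Prod>i\<in>(UNIV::'n set). 3)"
  proof (intro prod_mono conjI)
    have "0 \<le> 2 / (real R + 1)"
      by simp
    then show "(\<Sum>y\<in>{- int R..int R}. 1 / (1 + \<bar>real_of_int y\<bar>)\<^sup>2) \<le> 3"
      using sum_inverse_square_le[of R] by linarith
  qed (auto intro: sum_nonneg)
  finally show ?thesis
    by simp
qed

lemma summable_freq_weight:
  "summable (\<lambda>n. 1 / (1 + freq_norm (freq_enum n :: 'n::finite \<Rightarrow> int)) ^ (2 * CARD('n)))"
proof (rule summableI_nonneg_bounded)
  fix M
  define w where "w k = 1 / (1 + freq_norm (k :: 'n \<Rightarrow> int)) ^ (2 * CARD('n))" for k
  define S where "S = (freq_enum :: nat \<Rightarrow> ('n \<Rightarrow> int)) ` {..<M}"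
  define R where "R = nat (\<Sum>k\<in>S. \<Sum>i\<in>UNIV. \<bar>k i\<bar>)"
  have S_box: "S \<subseteq> PiE UNIV (\<lambda>_. {- int R..int R})"
  proof
    fix k
    assume k: "k \<in> S"
    have "\<bar>k i\<bar> \<le> (\<Sum>k\<in>S. \<Sum>i\<in>UNIV. \<bar>k i\<bar>)" for i
      using member_le_sum[of i UNIV "\<lambda>i. \<bar>k i\<bar>"] member_le_sum[OF k, of "\<lambda>k. \<Sum>i\<in>UNIV. \<bar>k i\<bar>"]
      by (force simp: S_def intro: sum_nonneg)
    moreover have "0 \<le> (\<Sum>k\<in>S. \<Sum>i\<in>UNIV. \<bar>k i\<bar>)"
      by (intro sum_nonneg) auto
    ultimately have "\<bar>k i\<bar> \<le> int R" for i
      unfolding R_def by simp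
    then have "k i \<in> {- int R..int R}" for i
      using abs_le_iff[of "k i" "int R"] by auto
    then show "k \<in> PiE UNIV (\<lambda>_. {- int R..int R})"
      by (auto simp: PiE_def extensional_def)
  qed
  have "inj_on (freq_enum :: nat \<Rightarrow> ('n \<Rightarrow> int)) {..<M}"
    using bij_freq_enum by (auto simp: bij_def intro: inj_on_subset)
  then have "(\<Sum>n<M. w (freq_enum n)) = (\<Sum>k\<in>S. w k)"
    unfolding S_def by (simp add: sum.reindex)
  also have "\<dots> \<le> (\<Sum>k\<in>PiE UNIV (\<lambda>_. {- int R..int R}). w k)"
    using freq_norm_nonneg by (intro sum_mono2[OF _ S_box]) (auto simp: w_def intro: finite_PiE)
  also have "\<dots> \<le> 3 ^ CARD('n)"
    unfolding w_def by (rule sum_freq_weight_box_le)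
  finally show "(\<Sum>n<M. 1 / (1 + freq_norm (freq_enum n :: 'n \<Rightarrow> int)) ^ (2 * CARD('n))) \<le> 3 ^ CARD('n)"
    by (simp add: w_def)
qed (simp add: freq_norm_nonneg)

lemma rapid_decay_if_rapidly_decreasing:
  fixes v :: "('n::finite \<Rightarrow> int) \<Rightarrow> complex"
  assumes "rapidly_decreasing v"
  shows "rapid_decay (\<lambda>n. v (freq_enum n)) (freq_enum :: nat \<Rightarrow> ('n \<Rightarrow> int))"
  unfolding rapid_decay_def
proof
  fix m
  define r where "r = 2 * CARD('n)"
  obtain C where C: "\<And>k. norm (v k) * (1 + freq_norm k) ^ (m + r) \<le> C"
    using assms unfolding rapidly_decreasing_def by blast
  have le: "norm (norm (v (freq_enum n)) * (1 + freq_norm (freq_enum n :: 'n \<Rightarrow> int)) ^ m)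
      \<le> C * (1 / (1 + freq_norm (freq_enum n :: 'n \<Rightarrow> int)) ^ r)" for n
  proof -
    define P where "P = 1 + freq_norm (freq_enum n :: 'n \<Rightarrow> int)"
    have "P > 0"
      using freq_norm_nonneg[of "freq_enum n :: 'n \<Rightarrow> int"] by (simp add: P_def)
    then have "norm (v (freq_enum n)) * P ^ m = norm (v (freq_enum n)) * P ^ (m + r) / P ^ r"
      by (simp add: power_add)
    also have "\<dots> \<le> C / P ^ r"
      using C[of "freq_enum n"] \<open>P > 0\<close> by (intro divide_right_mono) (simp_all add: P_def[symmetric])
    finally show ?thesis
      using \<open>P > 0\<close> by (simp add: P_def[symmetric])
  qed
  have "summable (\<lambda>n. C * (1 / (1 + freq_norm (freq_enum n :: 'n \<Rightarrow> int)) ^ r))"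
    unfolding r_def by (rule summable_mult[OF summable_freq_weight])
  from summable_comparison_test'[OF this le]
  show "summable (\<lambda>n. norm (v (freq_enum n)) * (1 + freq_norm (freq_enum n :: 'n \<Rightarrow> int)) ^ m)" .
qed

lemma integral_torus_char:
  "integral torus_box (torus_char l :: real^'n::finite \<Rightarrow> complex) =
     (if l = (\<lambda>i. 0) then (2*pi) ^ CARD('n) else 0)"
proof (cases "l = (\<lambda>i. 0)")
  case True
  then have "torus_char l = (\<lambda>x::real^'n. 1)"
    by (simp add: fun_eq_iff torus_char_def)
  then show ?thesis
    using True by (simp add: content_torus_box scaleR_conv_of_real)
next
  case False
  then obtain j where j: "l j \<noteq> 0"
    by auto
  have "integral torus_box (pd j (torus_char l :: real^'n \<Rightarrow> complex)) = 0"
    by (rule integral_pd_periodic_eq_0)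
       (auto simp: torus_char_periodic torus_char_line_differentiable pd_torus_char[abs_def]
         intro!: continuous_intros)
  then show ?thesis
    using j False by (simp add: pd_torus_char[abs_def])
qed

lemma dist_of_char_series:
  fixes \<phi> :: "real^'n::finite \<Rightarrow> complex"
  assumes summable: "summable (\<lambda>n. norm (a n))" and cont: "continuous_on UNIV \<phi>"
  shows "(\<lambda>n. a n * dist_of (torus_char (k n)) \<phi>) sums dist_of (char_series a k) \<phi>"
proof -
  obtain B where B: "\<And>x. x \<in> torus_box \<Longrightarrow> norm (\<phi> x) \<le> B"
    using continuous_on_compact_bound[OF compact_cbox continuous_on_subset[OF cont]] by blast
  define f where "f n x = a n * torus_char (k n) x * \<phi> x" for n x
  have "uniform_limit torus_box (\<lambda>N x. \<Sum>n<N. f n x) (\<lambda>x. \<Sum>n. f n x) sequentially"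
    using B by (intro Weierstrass_m_test[OF _ summable_mult2[OF summable, of B]])
      (simp add: f_def norm_mult mult_left_mono)
  moreover have "(\<Sum>n. f n x) = char_series a k x * \<phi> x" for x
    unfolding f_def char_series_def by (rule suminf_mult2[symmetric, OF summable_char_series[OF summable]])
  ultimately have ul: "uniform_limit torus_box (\<lambda>N x. \<Sum>n<N. f n x) (\<lambda>x. char_series a k x * \<phi> x) sequentially"
    by simp
  have cont_N: "continuous_on torus_box (\<lambda>x. \<Sum>n<N. f n x)" for N
    unfolding f_def by (intro continuous_intros continuous_on_subset[OF cont]) auto
  obtain I J where I: "\<And>N. ((\<lambda>x. \<Sum>n<N. f n x) has_integral I N) torus_box"
    and J: "((\<lambda>x. char_series a k x * \<phi> x) has_integral J) torus_box" and "I \<longlonglongrightarrow> J"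
    using uniform_limit_integral_cbox[OF ul cont_N] by auto
  have "I = (\<lambda>N. \<Sum>n<N. a n * dist_of (torus_char (k n)) \<phi>)"
  proof
    fix N
    have "I N = (\<Sum>n<N. integral torus_box (f n))"
      using I[of N] unfolding f_def
      by (subst integral_sum[symmetric])
         (auto simp: integral_unique intro!: integrable_continuous continuous_intros
           continuous_on_subset[OF cont])
    then show "I N = (\<Sum>n<N. a n * dist_of (torus_char (k n)) \<phi>)"
      unfolding f_def[abs_def] dist_of_def by (simp add: mult.assoc)
  qed
  with \<open>I \<longlonglongrightarrow> J\<close> have "(\<lambda>N. \<Sum>n<N. a n * dist_of (torus_char (k n)) \<phi>) \<longlonglongrightarrow> J"
    by simp
  then show ?thesis
    unfolding sums_def using integral_unique[OF J] by (simp add: dist_of_def)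
qed

lemma dist_of_char_series_torus_char:
  assumes "summable (\<lambda>n. norm (a n))"
  shows "dist_of (char_series a (freq_enum :: nat \<Rightarrow> ('n::finite \<Rightarrow> int))) (torus_char k) =
    a (inv freq_enum (- k)) * (2*pi) ^ CARD('n)"
proof -
  define n0 where "n0 = inv freq_enum (- k)"
  have "freq_enum n0 = - k"
    unfolding n0_def by (rule surj_f_inv_f[OF bij_is_surj[OF bij_freq_enum]])
  moreover have "inj (freq_enum :: nat \<Rightarrow> ('n \<Rightarrow> int))"
    by (rule bij_is_inj[OF bij_freq_enum])
  ultimately have "freq_enum n = - k \<longleftrightarrow> n = n0" for n
    by (metis injD)
  moreover have "(\<lambda>i. freq_enum n i + k i) = (\<lambda>i. 0) \<longleftrightarrow> freq_enum n = - k" for n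
    by (auto simp: fun_eq_iff eq_neg_iff_add_eq_0)
  ultimately have "(\<lambda>i. freq_enum n i + k i) = (\<lambda>i. 0) \<longleftrightarrow> n = n0" for n
    by simp
  then have "(\<lambda>n. a n * dist_of (torus_char (freq_enum n)) (torus_char k)) =
      (\<lambda>n. if n = n0 then a n * (2*pi) ^ CARD('n) else 0)"
    by (simp add: fun_eq_iff dist_of_def torus_char_mult integral_torus_char)
  moreover have "(\<lambda>n. if n = n0 then a n * (2*pi) ^ CARD('n) else 0) sums (a n0 * (2*pi) ^ CARD('n))"
    by (rule sums_single)
  ultimately show ?thesis
    using dist_of_char_series[OF assms continuous_on_torus_char, of freq_enum k]
    by (simp add: sums_iff n0_def)
qed

definition fourier_coeff :: "(real^'n::finite \<Rightarrow> complex) \<Rightarrow> ('n \<Rightarrow> int) \<Rightarrow> complex" where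
  "fourier_coeff \<psi> k = dist_of \<psi> (torus_char (- k)) / (2*pi) ^ CARD('n)"

lemma rapidly_decreasing_fourier_coeff:
  fixes \<psi> :: "real^'n::finite \<Rightarrow> complex"
  assumes "torus_smooth \<psi>"
  shows "rapidly_decreasing (fourier_coeff \<psi>)"
  unfolding rapidly_decreasing_def
proof
  fix m
  obtain C where C: "\<And>k. norm (dist_of \<psi> (torus_char k)) * (1 + freq_norm k) ^ m \<le> C"
    using rapidly_decreasing_dist_of_torus_char[OF assms] unfolding rapidly_decreasing_def by blast
  have "norm (fourier_coeff \<psi> k) * (1 + freq_norm k) ^ m \<le> C / (2*pi) ^ CARD('n)" for k
  proof -
    have "norm (fourier_coeff \<psi> k) * (1 + freq_norm k) ^ m =
        norm (dist_of \<psi> (torus_char (- k))) * (1 + freq_norm (- k)) ^ m / (2*pi) ^ CARD('n)"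
      by (simp add: fourier_coeff_def norm_divide norm_power norm_mult)
    also have "\<dots> \<le> C / (2*pi) ^ CARD('n)"
      by (rule divide_right_mono[OF C]) simp
    finally show ?thesis .
  qed
  then show "\<exists>C. \<forall>k. norm (fourier_coeff \<psi> k) * (1 + freq_norm k) ^ m \<le> C"
    by blast
qed

theorem fourier_inversion:
  fixes \<psi> :: "real^'n::finite \<Rightarrow> complex"
  assumes "torus_smooth \<psi>"
  shows "\<psi> = char_series (\<lambda>n. fourier_coeff \<psi> (freq_enum n)) freq_enum"
proof
  fix x
  define a where "a n = fourier_coeff \<psi> (freq_enum n)" for n
  have summable: "summable (\<lambda>n. norm (a n))"
    unfolding a_def
    by (rule rapid_decay_summable[OF rapid_decay_if_rapidly_decreasing[OF
          rapidly_decreasing_fourier_coeff[OF assms]]])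
  define h where "h y = \<psi> y - char_series a freq_enum y" for y
  have "h x = 0"
  proof (rule torus_periodic_eq_0_if_dist_of_torus_char_eq_0)
    show "continuous_on UNIV h"
      unfolding h_def
      by (intro continuous_intros torus_smooth_continuous_on[OF assms] continuous_on_char_series[OF summable])
    show "torus_periodic h"
      unfolding torus_periodic_def h_def by (simp add: torus_smooth_periodic[OF assms] char_series_periodic)
    show "dist_of h (torus_char k) = 0" for k :: "'n \<Rightarrow> int"
    proof -
      have "dist_of h (torus_char k) = dist_of \<psi> (torus_char k) - dist_of (char_series a freq_enum) (torus_char k)"
        unfolding dist_of_def h_def left_diff_distrib
        by (rule integral_diff)
           (auto intro!: integrable_continuous continuous_intros torus_smooth_continuous_on[OF assms]
             continuous_on_char_series[OF summable])
      also have "dist_of (char_series a freq_enum) (torus_char k) = dist_of \<psi> (torus_char k)"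
        using surj_f_inv_f[OF bij_is_surj[OF bij_freq_enum], of "- k"]
        by (simp add: dist_of_char_series_torus_char[OF summable] a_def fourier_coeff_def fun_Compl_def)
      finally show ?thesis
        by simp
    qed
  qed
  then show "\<psi> x = char_series (\<lambda>n. fourier_coeff \<psi> (freq_enum n)) freq_enum x"
    by (simp add: h_def a_def[abs_def])
qed


section \<open>Distributions applied to series of characters\<close>

definition torus_seminorm :: "nat \<Rightarrow> (real^'n::finite \<Rightarrow> complex) \<Rightarrow> real" where
  "torus_seminorm N \<phi> = (\<Sum>js\<in>{js::'n list. length js \<le> N}. SUP x. norm (dpar js \<phi> x))"

lemma torus_distribution_linear:
  assumes "torus_distribution u" and "torus_smooth \<phi>" and "torus_smooth \<psi>"
  shows "u (\<lambda>x. a * \<phi> x + b * \<psi> x) = a * u \<phi> + b * u \<psi>"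
  using assms unfolding torus_distribution_def by blast

lemma torus_distribution_bound:
  assumes "torus_distribution u"
  obtains C N where "\<And>\<phi>. torus_smooth \<phi> \<Longrightarrow> norm (u \<phi>) \<le> C * torus_seminorm N \<phi>"
  using assms unfolding torus_distribution_def torus_seminorm_def by blast

lemma char_series_lessThan:
  "char_series (\<lambda>n. if n < N then a n else 0) k x = (\<Sum>n<N. a n * torus_char (k n) x)"
  unfolding char_series_def by (subst suminf_finite[of "{..<N}"]) auto

lemma torus_smooth_sum_torus_char:
  fixes a :: "nat \<Rightarrow> complex" and k :: "nat \<Rightarrow> ('n::finite \<Rightarrow> int)"
  shows "torus_smooth (\<lambda>x. \<Sum>n<N. a n * torus_char (k n) x)"
proof -
  have "rapid_decay (\<lambda>n. if n < N then a n else 0) k"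
    unfolding rapid_decay_def by (intro allI summable_finite[of "{..<N}"]) auto
  from torus_smooth_char_series[OF this] show ?thesis
    by (simp add: char_series_lessThan[abs_def])
qed

lemma torus_distribution_sum_torus_char:
  fixes a :: "nat \<Rightarrow> complex" and k :: "nat \<Rightarrow> ('n::finite \<Rightarrow> int)"
  assumes "torus_distribution u"
  shows "u (\<lambda>x. \<Sum>n<N. a n * torus_char (k n) x) = (\<Sum>n<N. a n * u (torus_char (k n)))"
proof (induction N)
  case 0
  then show ?case
    using torus_distribution_linear[OF assms torus_smooth_torus_char torus_smooth_torus_char,
        of 0 "\<lambda>i. 0" 0 "\<lambda>i. 0"] by simp
next
  case (Suc N)
  from torus_distribution_linear[OF assms torus_smooth_sum_torus_char[where a = a and k = k and N = N]
      torus_smooth_torus_char[of "k N"], of 1 "a N"] Suc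
  show ?case
    by simp
qed

lemma char_series_split:
  assumes "summable (\<lambda>n. norm (a n))"
  shows "char_series a k x =
    (\<Sum>n<N. a n * torus_char (k n) x) + char_series (\<lambda>n. if n < N then 0 else a n) k x"
proof -
  have "(\<lambda>n. (if n < N then a n else 0) * torus_char (k n) x) sums (\<Sum>n<N. a n * torus_char (k n) x)"
    using sums_finite[of "{..<N}" "\<lambda>n. (if n < N then a n else 0) * torus_char (k n) x"] by simp
  moreover have "summable (\<lambda>n. norm (if n < N then 0 else a n))"
    by (rule summable_comparison_test'[OF assms, where N = 0]) simp
  then have "(\<lambda>n. (if n < N then 0 else a n) * torus_char (k n) x) sums
      char_series (\<lambda>n. if n < N then 0 else a n) k x"
    unfolding char_series_def by (rule summable_sums[OF summable_char_series])
  ultimately have "(\<lambda>n. (if n < N then a n else 0) * torus_char (k n) x +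
      (if n < N then 0 else a n) * torus_char (k n) x)
      sums ((\<Sum>n<N. a n * torus_char (k n) x) + char_series (\<lambda>n. if n < N then 0 else a n) k x)"
    by (rule sums_add)
  moreover have "(\<lambda>n. (if n < N then a n else 0) * torus_char (k n) x +
      (if n < N then 0 else a n) * torus_char (k n) x) = (\<lambda>n. a n * torus_char (k n) x)"
    by (auto simp: fun_eq_iff)
  ultimately show ?thesis
    unfolding char_series_def by (simp add: sums_iff)
qed

lemma torus_distribution_char_series_tail:
  assumes "torus_distribution u" and "rapid_decay a k"
  shows "u (char_series a k) - (\<Sum>n<N. a n * u (torus_char (k n))) =
    u (char_series (\<lambda>n. if n < N then 0 else a n) k)"
proof -
  have "char_series (\<lambda>n. if n < N then 0 else a n) k =
      (\<lambda>x. 1 * char_series a k x + (-1) * (\<Sum>n<N. a n * torus_char (k n) x))"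
    using char_series_split[OF rapid_decay_summable[OF assms(2)], where k = k and N = N] by (simp add: fun_eq_iff)
  moreover have "u (\<lambda>x. 1 * char_series a k x + (-1) * (\<Sum>n<N. a n * torus_char (k n) x)) =
      u (char_series a k) - (\<Sum>n<N. a n * u (torus_char (k n)))"
    using torus_distribution_linear[OF assms(1) torus_smooth_char_series[OF assms(2)]
        torus_smooth_sum_torus_char[where a = a and k = k and N = N], of 1 "-1"]
      torus_distribution_sum_torus_char[OF assms(1), where N = N] by simp
  ultimately show ?thesis
    by simp
qed

lemma torus_seminorm_char_series_le:
  fixes k :: "nat \<Rightarrow> ('n::finite \<Rightarrow> int)"
  assumes "rapid_decay a k"
  shows "torus_seminorm N (char_series a k) \<le>
      real (card {js::'n list. length js \<le> N}) * (\<Sum>n. norm (a n) * (1 + freq_norm (k n)) ^ N)"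
    and "0 \<le> torus_seminorm N (char_series a k)"
proof -
  define T where "T = (\<Sum>n. norm (a n) * (1 + freq_norm (k n)) ^ N)"
  have le_T: "norm (dpar js (char_series a k) x) \<le> T" if "length js \<le> N" for js x
  proof -
    have "norm (dpar js (char_series a k) x) \<le> (\<Sum>n. norm (a n) * (1 + freq_norm (k n)) ^ length js)"
      by (rule norm_dpar_char_series_le[OF assms])
    also have "\<dots> \<le> T"
      unfolding T_def using assms that freq_norm_nonneg
      by (intro suminf_le) (auto simp: rapid_decay_def intro!: mult_left_mono power_increasing)
    finally show ?thesis .
  qed
  have bdd: "bdd_above (range (\<lambda>x. norm (dpar js (char_series a k) x)))" if "length js \<le> N" for js
    using le_T[OF that] by (intro bdd_aboveI2) blast
  have "(SUP x. norm (dpar js (char_series a k) x)) \<le> T" if "length js \<le> N" for js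
    using le_T[OF that] by (intro cSUP_least) auto
  then show "torus_seminorm N (char_series a k) \<le> real (card {js::'n list. length js \<le> N}) * T"
    unfolding torus_seminorm_def by (intro sum_bounded_above) auto
  have "0 \<le> (SUP x. norm (dpar js (char_series a k) x))" if "length js \<le> N" for js
    using order_trans[OF norm_ge_zero cSUP_upper[OF UNIV_I bdd[OF that]]] .
  then show "0 \<le> torus_seminorm N (char_series a k)"
    unfolding torus_seminorm_def by (intro sum_nonneg) auto
qed

lemma suminf_tail_tendsto_0:
  fixes w :: "nat \<Rightarrow> real"
  assumes "summable w"
  shows "(\<lambda>N. \<Sum>n. if n < N then 0 else w n) \<longlonglongrightarrow> 0"
proof -
  have "(\<Sum>n. if n < N then 0 else w n) = suminf w - (\<Sum>n<N. w n)" for N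
  proof -
    have "summable (\<lambda>n. if n < N then w n else 0)"
      by (rule summable_finite[of "{..<N}"]) auto
    then have "(\<Sum>n. if n < N then 0 else w n) = suminf w - (\<Sum>n. if n < N then w n else 0)"
      using suminf_diff[OF assms] by (simp add: if_distrib[of "\<lambda>t. w _ - t"] cong: if_cong)
    also have "(\<Sum>n. if n < N then w n else 0) = (\<Sum>n<N. w n)"
      by (subst suminf_finite[of "{..<N}"]) auto
    finally show ?thesis .
  qed
  moreover have "(\<lambda>N. suminf w - (\<Sum>n<N. w n)) \<longlonglongrightarrow> suminf w - suminf w"
    by (intro tendsto_intros summable_LIMSEQ[OF assms])
  ultimately show ?thesis
    by simp
qed

text \<open>The partial sums converge to the series in every seminorm \<open>torus_seminorm N\<close>, hence
  continuity of \<open>u\<close> lets it pass through the sum.\<close>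

theorem torus_distribution_char_series:
  fixes k :: "nat \<Rightarrow> ('n::finite \<Rightarrow> int)"
  assumes dist: "torus_distribution u" and rapid: "rapid_decay a k"
  shows "(\<lambda>n. a n * u (torus_char (k n))) sums u (char_series a k)"
proof -
  obtain C M where CM: "\<And>\<phi>. torus_smooth \<phi> \<Longrightarrow> norm (u \<phi>) \<le> C * torus_seminorm M \<phi>"
    using torus_distribution_bound[OF dist] by blast
  define tail where "tail N n = (if n < N then 0 else a n)" for N n
  define T where "T N = (\<Sum>n. norm (tail N n) * (1 + freq_norm (k n)) ^ M)" for N
  define c where "c = \<bar>C\<bar> * real (card {js::'n list. length js \<le> M})"
  have rapid_tail: "rapid_decay (tail N) k" for N
    unfolding tail_def by (rule rapid_decay_mono[OF rapid]) simp
  have diff: "u (char_series a k) - (\<Sum>n<N. a n * u (torus_char (k n))) = u (char_series (tail N) k)" for N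
    unfolding tail_def by (rule torus_distribution_char_series_tail[OF dist rapid])
  have bound: "norm (u (char_series (tail N) k)) \<le> c * T N" for N
  proof -
    have "norm (u (char_series (tail N) k)) \<le> C * torus_seminorm M (char_series (tail N) k)"
      by (rule CM[OF torus_smooth_char_series[OF rapid_tail]])
    also have "\<dots> \<le> \<bar>C\<bar> * torus_seminorm M (char_series (tail N) k)"
      using torus_seminorm_char_series_le(2)[OF rapid_tail] by (intro mult_right_mono) auto
    also have "\<dots> \<le> c * T N"
      using torus_seminorm_char_series_le(1)[OF rapid_tail[of N], of M]
      unfolding c_def T_def by (simp add: mult.assoc mult_left_mono)
    finally show ?thesis .
  qed
  have "T \<longlonglongrightarrow> 0"
  proof -
    have "summable (\<lambda>n. norm (a n) * (1 + freq_norm (k n)) ^ M)"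
      using rapid unfolding rapid_decay_def by blast
    moreover have "T = (\<lambda>N. \<Sum>n. if n < N then 0 else norm (a n) * (1 + freq_norm (k n)) ^ M)"
      unfolding T_def tail_def by (intro ext suminf_cong) auto
    ultimately show ?thesis
      using suminf_tail_tendsto_0 by simp
  qed
  then have cT: "(\<lambda>N. c * T N) \<longlonglongrightarrow> 0"
    by (rule tendsto_mult_right_zero)
  have "\<forall>N. norm (u (char_series a k) - (\<Sum>n<N. a n * u (torus_char (k n)))) \<le> c * T N"
    using diff bound by simp
  from Lim_null_comparison[OF always_eventually[OF this] cT]
  have "(\<lambda>N. u (char_series a k) - (\<Sum>n<N. a n * u (torus_char (k n)))) \<longlonglongrightarrow> 0" .
  then have "(\<lambda>N. u (char_series a k) - (u (char_series a k) - (\<Sum>n<N. a n * u (torus_char (k n)))))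
      \<longlonglongrightarrow> u (char_series a k) - 0"
    by (intro tendsto_diff tendsto_const)
  then show ?thesis
    unfolding sums_def by simp
qed


section \<open>Global hypoellipticity from a lower bound on the symbol\<close>

text \<open>The witness is \<open>\<Sum>\<^sub>k u(e\<^sub>k) e\<^sub>-\<^sub>k / (2\<pi>)\<^sup>n\<close>.\<close>

theorem smooth_dist_if_rapidly_decreasing:
  fixes u :: "(real^'n::finite \<Rightarrow> complex) \<Rightarrow> complex"
  assumes dist: "torus_distribution u" and decreasing: "rapidly_decreasing (\<lambda>k. u (torus_char k))"
  shows "smooth_dist u"
proof -
  define b where "b n = u (torus_char (freq_enum n)) / (2*pi) ^ CARD('n)" for n
  have "rapid_decay (\<lambda>n. inverse ((2*pi) ^ CARD('n)) * u (torus_char (freq_enum n)))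
      (freq_enum :: nat \<Rightarrow> ('n \<Rightarrow> int))"
    by (rule rapid_decay_cmult[OF rapid_decay_if_rapidly_decreasing[OF decreasing]])
  then have rapid_b: "rapid_decay b (\<lambda>n. - freq_enum n :: 'n \<Rightarrow> int)"
    by (simp add: b_def[abs_def] divide_inverse mult.commute)
  define g :: "real^'n \<Rightarrow> complex" where "g = char_series b (\<lambda>n. - freq_enum n)"
  show ?thesis
    unfolding smooth_dist_def
  proof (intro exI conjI allI impI)
    show "torus_smooth g"
      unfolding g_def by (rule torus_smooth_char_series[OF rapid_b])
    fix \<phi> :: "real^'n \<Rightarrow> complex"
    assume "torus_smooth \<phi>"
    have "(\<lambda>n. fourier_coeff \<phi> (freq_enum n) * u (torus_char (freq_enum n))) sums u \<phi>"
      using torus_distribution_char_series[OF dist rapid_decay_if_rapidly_decreasing[OF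
            rapidly_decreasing_fourier_coeff[OF \<open>torus_smooth \<phi>\<close>]]]
      by (simp flip: fourier_inversion[OF \<open>torus_smooth \<phi>\<close>])
    moreover have "(\<lambda>n. b n * dist_of (torus_char (- freq_enum n)) \<phi>) sums dist_of g \<phi>"
      unfolding g_def by (rule dist_of_char_series[OF rapid_decay_summable[OF rapid_b]
            torus_smooth_continuous_on[OF \<open>torus_smooth \<phi>\<close>]])
    moreover have "b n * dist_of (torus_char (- freq_enum n)) \<phi> =
        fourier_coeff \<phi> (freq_enum n) * u (torus_char (freq_enum n))" for n
      by (simp add: b_def fourier_coeff_def dist_of_def mult.commute)
    ultimately show "u \<phi> = dist_of g \<phi>"
      by (simp add: sums_iff)
  qed
qed

lemma rapidly_decreasing_divide_symbol:
  fixes q :: "('n::finite \<Rightarrow> int) \<Rightarrow> complex"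
  assumes "rapidly_decreasing w" and "\<delta> > 0"
    and "\<forall>\<^sub>F k in cofinite. \<delta> / (1 + freq_norm k) ^ N \<le> norm (q k)"
    and "\<And>k. q k * v k = w k"
  shows "rapidly_decreasing v"
  unfolding rapidly_decreasing_def
proof
  fix m
  obtain Cw where Cw: "\<And>k. norm (w k) * (1 + freq_norm k) ^ (m + N) \<le> Cw"
    using assms(1) unfolding rapidly_decreasing_def by blast
  define E where "E = {k. \<not> \<delta> / (1 + freq_norm k) ^ N \<le> norm (q k)}"
  have "finite E"
    using assms(3) unfolding E_def eventually_cofinite .
  define C where "C = Cw / \<delta> + (\<Sum>k\<in>E. norm (v k) * (1 + freq_norm k) ^ m)"
  have E_nonneg: "0 \<le> (\<Sum>k\<in>E. norm (v k) * (1 + freq_norm k) ^ m)"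
    by (intro sum_nonneg) (simp add: freq_norm_nonneg)
  have Cw_nonneg: "0 \<le> Cw"
    using Cw[of "\<lambda>i. 0"] by (smt (verit) freq_norm_nonneg mult_nonneg_nonneg norm_ge_zero zero_le_power)
  have "norm (v k) * (1 + freq_norm k) ^ m \<le> C" for k
  proof (cases "k \<in> E")
    case True
    then have "norm (v k) * (1 + freq_norm k) ^ m \<le> (\<Sum>k\<in>E. norm (v k) * (1 + freq_norm k) ^ m)"
      using \<open>finite E\<close> by (intro member_le_sum) (simp_all add: freq_norm_nonneg)
    moreover have "0 \<le> Cw / \<delta>"
      using Cw_nonneg \<open>\<delta> > 0\<close> by simp
    ultimately show ?thesis
      unfolding C_def by linarith
  next
    case False
    define P where "P = 1 + freq_norm k"
    have "P > 0"
      using freq_norm_nonneg[of k] by (simp add: P_def)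
    have q_ge: "\<delta> / P ^ N \<le> norm (q k)"
      using False by (simp add: E_def P_def)
    have "\<delta> * norm (v k) \<le> norm (q k) * P ^ N * norm (v k)"
      using q_ge \<open>P > 0\<close> by (intro mult_right_mono) (simp_all add: divide_le_eq)
    also have "\<dots> = norm (w k) * P ^ N"
      using assms(4)[of k] by (simp add: norm_mult[symmetric] mult_ac)
    finally have "\<delta> * (norm (v k) * P ^ m) \<le> norm (w k) * P ^ (m + N)"
      using \<open>P > 0\<close> by (simp add: power_add mult_ac mult_right_mono)
    also have "\<dots> \<le> Cw"
      using Cw[of k] by (simp add: P_def)
    finally have "norm (v k) * P ^ m \<le> Cw / \<delta>"
      using \<open>\<delta> > 0\<close> by (simp add: field_simps)
    then show ?thesis
      using E_nonneg by (simp add: C_def P_def)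
  qed
  then show "\<exists>C. \<forall>k. norm (v k) * (1 + freq_norm k) ^ m \<le> C"
    by blast
qed

definition transposed_symbol :: "('n::finite \<Rightarrow> complex) \<Rightarrow> complex \<Rightarrow> ('n \<Rightarrow> int) \<Rightarrow> complex" where
  "transposed_symbol c c0 k = c0 - (\<Sum>j\<in>UNIV. c j * of_int (k j))"

lemma cc_op_transpose_torus_char:
  "cc_op (\<lambda>j. - c j) c0 (torus_char k) = (\<lambda>x. transposed_symbol c c0 k * torus_char k x)"
proof
  fix x
  have "cc_op (\<lambda>j. - c j) c0 (torus_char k) x =
      c0 * torus_char k x - (\<Sum>j\<in>UNIV. c j * of_int (k j) * torus_char k x)"
    by (simp add: cc_op_def Dop_def pd_torus_char sum_negf[symmetric] mult_ac)
  then show "cc_op (\<lambda>j. - c j) c0 (torus_char k) x = transposed_symbol c c0 k * torus_char k x"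
    by (simp add: transposed_symbol_def left_diff_distrib sum_distrib_right)
qed

theorem globally_hypoelliptic_if_symbol_bound:
  fixes c :: "'n::finite \<Rightarrow> complex"
  assumes "\<delta> > 0"
    and "\<forall>\<^sub>F k in cofinite. \<delta> / (1 + freq_norm k) ^ N \<le> norm (transposed_symbol c c0 k)"
  shows "globally_hypoelliptic c c0"
  unfolding globally_hypoelliptic_def
proof (intro allI impI)
  fix u :: "(real^'n \<Rightarrow> complex) \<Rightarrow> complex"
  assume dist: "torus_distribution u" and "smooth_dist (cc_op_dist c c0 u)"
  then obtain f where "torus_smooth f"
    and f: "\<And>\<phi>. torus_smooth \<phi> \<Longrightarrow> u (cc_op (\<lambda>j. - c j) c0 \<phi>) = dist_of f \<phi>"
    unfolding smooth_dist_def cc_op_dist_def by blast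
  have eq: "transposed_symbol c c0 k * u (torus_char k) = dist_of f (torus_char k)" for k
    using torus_distribution_linear[OF dist torus_smooth_torus_char torus_smooth_torus_char,
        of "transposed_symbol c c0 k" k 0 k] f[OF torus_smooth_torus_char, of k]
    by (simp add: cc_op_transpose_torus_char)
  have "rapidly_decreasing (\<lambda>k. u (torus_char k))"
    by (rule rapidly_decreasing_divide_symbol[OF
          rapidly_decreasing_dist_of_torus_char[OF \<open>torus_smooth f\<close>] assms eq])
  then show "smooth_dist u"
    by (rule smooth_dist_if_rapidly_decreasing[OF dist])
qed


section \<open>The Diophantine estimate\<close>

lemma non_liouville_approx_bound:
  fixes \<rho> :: real
  assumes "\<rho> \<notin> \<rat>" and "\<not> liouville \<rho>"
  obtains \<delta> N where "0 < \<delta>" and "\<delta> \<le> 1"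
    and "\<And>(p::int) (q::nat). q > 0 \<Longrightarrow> \<delta> / real q ^ N \<le> \<bar>\<rho> - of_int p / of_nat q\<bar>"
proof -
  obtain M :: real where "M > 0"
    and "finite {(p, q) | (p::int) (q::nat). q > 0 \<and> \<bar>\<rho> - of_int p / of_nat q\<bar> < real q powr (- M)}"
    using assms unfolding liouville_def by blast
  moreover define F where
    "F = {(p, q) | (p::int) (q::nat). q > 0 \<and> \<bar>\<rho> - of_int p / of_nat q\<bar> < real q powr (- M)}"
  ultimately have "finite F"
    by simp
  define N where "N = nat \<lceil>M\<rceil>"
  define \<delta> where "\<delta> = Min (insert 1 ((\<lambda>(p, q). \<bar>\<rho> - of_int p / of_nat q\<bar>) ` F))"
  have dist_pos: "\<bar>\<rho> - of_int p / of_nat q\<bar> > 0" for p :: int and q :: nat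
  proof -
    have "of_int p / of_nat q \<in> \<rat>"
      by (intro Rats_divide Rats_of_int Rats_of_nat)
    then show ?thesis
      using assms(1) by auto
  qed
  have "0 < \<delta>" and "\<delta> \<le> 1"
    unfolding \<delta>_def using \<open>finite F\<close> dist_pos by (auto simp: Min_gr_iff)
  moreover have "\<delta> / real q ^ N \<le> \<bar>\<rho> - of_int p / of_nat q\<bar>" if "q > 0" for p :: int and q :: nat
  proof -
    have q_ge_1: "real q ^ N \<ge> 1"
      using that by simp
    show ?thesis
    proof (cases "(p, q) \<in> F")
      case True
      then have "\<delta> \<le> \<bar>\<rho> - of_int p / of_nat q\<bar>"
        unfolding \<delta>_def using \<open>finite F\<close> by (intro Min_le) auto
      moreover have "\<delta> / real q ^ N \<le> \<delta>"
        using q_ge_1 \<open>0 < \<delta>\<close> by (simp add: divide_le_eq)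
      ultimately show ?thesis
        by linarith
    next
      case False
      then have "real q powr (- M) \<le> \<bar>\<rho> - of_int p / of_nat q\<bar>"
        using that unfolding F_def by auto
      moreover have "M \<le> real N"
        unfolding N_def by linarith
      then have "real q powr (- real N) \<le> real q powr (- M)"
        using that by (intro powr_mono) auto
      moreover have "real q powr (- real N) = 1 / real q ^ N"
        using that by (simp add: powr_minus powr_realpow divide_inverse)
      moreover have "\<delta> / real q ^ N \<le> 1 / real q ^ N"
        using \<open>\<delta> \<le> 1\<close> q_ge_1 by (intro divide_right_mono) auto
      ultimately show ?thesis
        by linarith
    qed
  qed
  ultimately show ?thesis
    using that by blast
qed

lemma linear_form_lower_bound:
  fixes A B :: real
  assumes "B \<noteq> 0" and "A / B \<notin> \<rat>" and "\<not> liouville (A / B)"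
  obtains \<delta> N where "\<delta> > 0"
    and "\<And>k1 k2 :: int. (k1, k2) \<noteq> (0, 0) \<Longrightarrow>
      \<delta> / (1 + \<bar>real_of_int k1\<bar>) ^ N \<le> \<bar>A * of_int k1 + B * of_int k2\<bar>"
proof -
  obtain \<delta> N where \<delta>: "0 < \<delta>" "\<delta> \<le> 1"
    and approx: "\<And>(p::int) (q::nat). q > 0 \<Longrightarrow> \<delta> / real q ^ N \<le> \<bar>A / B - of_int p / of_nat q\<bar>"
    using non_liouville_approx_bound[OF assms(2,3)] by blast
  have "\<bar>B\<bar> * \<delta> / (1 + \<bar>real_of_int k1\<bar>) ^ N \<le> \<bar>A * of_int k1 + B * of_int k2\<bar>"
    if "(k1, k2) \<noteq> (0, 0)" for k1 k2 :: int
  proof (cases "k1 = 0")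
    case True
    with that have "1 \<le> \<bar>k2\<bar>"
      by auto
    then have "1 \<le> \<bar>real_of_int k2\<bar>"
      by (metis of_int_1 of_int_abs of_int_le_iff)
    then have "\<bar>B\<bar> * \<delta> \<le> \<bar>A * of_int k1 + B * of_int k2\<bar>"
      using True \<delta> mult_mono[of "\<bar>B\<bar>" "\<bar>B\<bar>" \<delta> "\<bar>real_of_int k2\<bar>"] by (simp add: abs_mult)
    then show ?thesis
      using True by simp
  next
    case False
    define q where "q = nat \<bar>k1\<bar>"
    define p where "p = (if k1 > 0 then - k2 else k2)"
    have q: "q > 0" "real q = \<bar>real_of_int k1\<bar>"
      using False by (simp_all add: q_def)
    have "A * of_int k1 + B * of_int k2 = B * of_int k1 * (A / B - of_int p / of_nat q)"
      using False assms(1) q(2) by (auto simp: p_def field_simps abs_if split: if_splits)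
    then have "\<bar>A * of_int k1 + B * of_int k2\<bar> = \<bar>B\<bar> * real q * \<bar>A / B - of_int p / of_nat q\<bar>"
      by (simp add: abs_mult q(2))
    also have "\<dots> \<ge> \<bar>B\<bar> * 1 * (\<delta> / real q ^ N)"
      using q \<delta> approx[OF q(1), of p] by (intro mult_mono) auto
    also have "\<bar>B\<bar> * 1 * (\<delta> / real q ^ N) \<ge> \<bar>B\<bar> * \<delta> / (1 + \<bar>real_of_int k1\<bar>) ^ N"
      using q \<delta> by (auto simp: field_simps intro!: mult_left_mono power_mono)
    finally show ?thesis .
  qed
  moreover have "\<bar>B\<bar> * \<delta> > 0"
    using assms(1) \<delta> by simp
  ultimately show ?thesis
    using that by blast
qed

lemma sum_UNIV_3: "sum f (UNIV :: 3 set) = f 0 + f 1 + f 2"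
proof -
  have "sum f (UNIV :: 3 set) = f 1 + f 2 + f 3"
    by (rule sum_3)
  moreover have "(3::3) = 0"
    by simp
  ultimately show ?thesis
    by (simp add: ac_simps)
qed

lemma transposed_symbol_coeffs2:
  "transposed_symbol (coeffs2 \<alpha>1 \<alpha>2) c0 k = c0 - (of_int (k 0) + \<alpha>1 * of_int (k 1) + \<alpha>2 * of_int (k 2))"
  by (simp add: transposed_symbol_def coeffs2_def sum_UNIV_3)

text \<open>The imaginary part of the symbol is \<open>-(Im \<alpha>\<^sub>1 k\<^sub>x + Im \<alpha>\<^sub>2 k\<^sub>y)\<close>; when \<open>k\<^sub>x = k\<^sub>y = 0\<close>
  the symbol is the real number \<open>-(\<lambda> + k\<^sub>t)\<close>, which is large for large \<open>k\<^sub>t\<close>.\<close>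

lemma norm_transposed_symbol_coeffs2_ge:
  assumes linear_form: "\<And>k1 k2 :: int. (k1, k2) \<noteq> (0, 0) \<Longrightarrow>
      \<delta> / (1 + \<bar>real_of_int k1\<bar>) ^ N \<le> \<bar>Im \<alpha>1 * of_int k1 + Im \<alpha>2 * of_int k2\<bar>"
    and "\<delta> > 0" and k: "\<bar>k 0\<bar> > \<lceil>\<bar>l\<bar>\<rceil> + 1 \<or> k 1 \<noteq> 0 \<or> k 2 \<noteq> 0"
  shows "min \<delta> 1 / (1 + freq_norm k) ^ N \<le> norm (transposed_symbol (coeffs2 \<alpha>1 \<alpha>2) (- complex_of_real l) k)"
    (is "_ \<le> norm ?q")
proof (cases "k 1 = 0 \<and> k 2 = 0")
  case True
  then have "\<bar>real_of_int (k 0)\<bar> \<ge> \<bar>l\<bar> + 2"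
    using k by linarith
  moreover have "?q = complex_of_real (- (l + of_int (k 0)))"
    using True by (simp add: transposed_symbol_coeffs2)
  ultimately have "1 \<le> norm ?q"
    by (simp only: norm_of_real)
  moreover have "1 \<le> (1 + freq_norm k) ^ N"
    using freq_norm_nonneg[of k] by simp
  ultimately show ?thesis
    by (smt (verit) divide_le_eq_1 min_def)
next
  case False
  then have "\<delta> / (1 + \<bar>real_of_int (k 1)\<bar>) ^ N \<le> \<bar>Im \<alpha>1 * of_int (k 1) + Im \<alpha>2 * of_int (k 2)\<bar>"
    by (intro linear_form) auto
  also have "\<dots> = \<bar>Im ?q\<bar>"
    by (simp add: transposed_symbol_coeffs2)
  also have "\<dots> \<le> norm ?q"
    by (rule abs_Im_le_cmod)
  finally have "\<delta> / (1 + \<bar>real_of_int (k 1)\<bar>) ^ N \<le> norm ?q" .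
  moreover have "min \<delta> 1 / (1 + freq_norm k) ^ N \<le> \<delta> / (1 + \<bar>real_of_int (k 1)\<bar>) ^ N"
    using abs_le_freq_norm[of k 1] \<open>\<delta> > 0\<close> by (intro frac_le power_mono) auto
  ultimately show ?thesis
    by linarith
qed

lemma transposed_symbol_coeffs2_lower_bound:
  assumes "Im \<alpha>2 \<noteq> 0" and "Im \<alpha>1 / Im \<alpha>2 \<notin> \<rat>" and "\<not> liouville (Im \<alpha>1 / Im \<alpha>2)"
  obtains \<delta> N where "\<delta> > 0" and "\<forall>\<^sub>F k in cofinite.
    \<delta> / (1 + freq_norm k) ^ N \<le> norm (transposed_symbol (coeffs2 \<alpha>1 \<alpha>2) (- complex_of_real l) k)"
proof -
  obtain \<delta> N where "\<delta> > 0" and linear_form: "\<And>k1 k2 :: int. (k1, k2) \<noteq> (0, 0) \<Longrightarrow>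
      \<delta> / (1 + \<bar>real_of_int k1\<bar>) ^ N \<le> \<bar>Im \<alpha>1 * of_int k1 + Im \<alpha>2 * of_int k2\<bar>"
    using linear_form_lower_bound[OF assms] by blast
  have "{k :: 3 \<Rightarrow> int. \<not> (\<bar>k 0\<bar> > \<lceil>\<bar>l\<bar>\<rceil> + 1 \<or> k 1 \<noteq> 0 \<or> k 2 \<noteq> 0)} \<subseteq> PiE UNIV (\<lambda>_. {- (\<lceil>\<bar>l\<bar>\<rceil> + 1)..\<lceil>\<bar>l\<bar>\<rceil> + 1})"
  proof (intro subsetI PiE_I)
    fix k :: "3 \<Rightarrow> int" and i :: 3
    assume "k \<in> {k. \<not> (\<bar>k 0\<bar> > \<lceil>\<bar>l\<bar>\<rceil> + 1 \<or> k 1 \<noteq> 0 \<or> k 2 \<noteq> 0)}"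
    moreover have "0 \<le> \<lceil>\<bar>l\<bar>\<rceil> + 1"
      by linarith
    moreover have "i = 0 \<or> i = 1 \<or> i = 2"
      using exhaust_3[of i] by auto
    ultimately show "k i \<in> {- (\<lceil>\<bar>l\<bar>\<rceil> + 1)..\<lceil>\<bar>l\<bar>\<rceil> + 1}"
      by auto
  qed simp
  then have "\<forall>\<^sub>F (k :: 3 \<Rightarrow> int) in cofinite. \<bar>k 0\<bar> > \<lceil>\<bar>l\<bar>\<rceil> + 1 \<or> k 1 \<noteq> 0 \<or> k 2 \<noteq> 0"
    unfolding eventually_cofinite by (rule finite_subset) (auto intro: finite_PiE)
  then have "\<forall>\<^sub>F k in cofinite.
      min \<delta> 1 / (1 + freq_norm k) ^ N \<le> norm (transposed_symbol (coeffs2 \<alpha>1 \<alpha>2) (- complex_of_real l) k)"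
    by (rule eventually_mono)
       (rule norm_transposed_symbol_coeffs2_ge[OF linear_form \<open>\<delta> > 0\<close>])
  moreover have "min \<delta> 1 > 0"
    using \<open>\<delta> > 0\<close> by simp
  ultimately show ?thesis
    using that by blast
qed

theorem mainTheorem10:
  fixes \<alpha>1 \<alpha>2 :: complex
  assumes "\<alpha>1 \<notin> \<real>" and "\<alpha>2 \<notin> \<real>"
    and "Im \<alpha>1 / Im \<alpha>2 \<notin> \<rat>"
    and "\<not> liouville (Im \<alpha>1 / Im \<alpha>2)"
  shows "N2 \<alpha>1 \<alpha>2 = {}"
proof -
  have "Im \<alpha>2 \<noteq> 0"
    using assms(2) by (simp add: complex_is_Real_iff)
  have "globally_hypoelliptic (coeffs2 \<alpha>1 \<alpha>2) (- complex_of_real l)" for l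
  proof -
    obtain \<delta> N where "\<delta> > 0" and "\<forall>\<^sub>F k in cofinite.
        \<delta> / (1 + freq_norm k) ^ N \<le> norm (transposed_symbol (coeffs2 \<alpha>1 \<alpha>2) (- complex_of_real l) k)"
      using transposed_symbol_coeffs2_lower_bound[OF \<open>Im \<alpha>2 \<noteq> 0\<close> assms(3,4)] by blast
    then show ?thesis
      by (rule globally_hypoelliptic_if_symbol_bound)
  qed
  then show ?thesis
    unfolding N2_def by simp
qed

end
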